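(* Let $k[X,Y]$ be the polynomial ring over a field $k$, and let $R_1 = k[X^4, XY^3, Y^4]$ and $R_2 = k[X^5, XY^4, Y^5]$. Then for each $i=1,2$, $R_i \subsetneq R_i^a = R_i^*$, where $R_i^*$ is the strict closure of $R_i$ in $\overline{R_i}$ and $R_i^a$ is the weakly Arf closure of $R_i$. (Explicitly, $R_1^* = R_1 + R_1X^7Y^5$ and $R_2^* = R_2 + R_2X^9Y^6 + R_2X^8Y^7 + R_2X^4Y^{11}$.)
   Context: For a commutative ring $A$, $W(A)$ is the set of non-zerodivisors of $A$, $\mathrm{Q}(A)$ the total ring of fractions and $\overline A$ the integral closure of $A$ in $\mathrm{Q}(A)$. The strict closure of $A$ in $B\supseteq A$ is $\{\alpha \in B \mid \alpha\otimes 1 = 1\otimes \alpha \text{ in } B\otimes_A B\}$. Weakly Arf closure: set $A_1 = A[\frac{yz}{x} \mid x\in W(A),\ y,z\in A,\ \frac{y}{x},\frac{z}{x}\in\overline A] \subseteq \mathrm{Q}(A)$, define recursively $A_0 = A$, $A_n = (A_{n-1})_1$ for $n>0$, and $A^a = \bigcup_{n\ge 0} A_n$; this is the smallest weakly Arf ring between $A$ and $\overline A$, where $A$ is weakly Arf if for all $x,y,z\in A$ with $x\in W(A)$ and $\frac yx,\frac zx\in\overline A$ one has $\frac{yz}{x}\in A$. *)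

theory Defs
  imports "HOL-Computational_Algebra.Polynomial" "HOL-Computational_Algebra.Fraction_Field"
begin

text \<open>All rings considered are subrings (given as carrier sets) of an ambient field 'F.\<close>

inductive_set ring_gen :: "'F::field set \<Rightarrow> 'F set" for S where
  base: "s \<in> S \<Longrightarrow> s \<in> ring_gen S"
| one: "1 \<in> ring_gen S"
| add: "a \<in> ring_gen S \<Longrightarrow> b \<in> ring_gen S \<Longrightarrow> a + b \<in> ring_gen S"
| neg: "a \<in> ring_gen S \<Longrightarrow> - a \<in> ring_gen S"
| mult: "a \<in> ring_gen S \<Longrightarrow> b \<in> ring_gen S \<Longrightarrow> a * b \<in> ring_gen S"

definition nzd :: "'F::field set \<Rightarrow> 'F set" where
  "nzd A = {x \<in> A. \<forall>y\<in>A. x * y = 0 \<longrightarrow> y = 0}"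

definition total_quot :: "'F::field set \<Rightarrow> 'F set" where
  "total_quot A = {y / x | x y. x \<in> nzd A \<and> y \<in> A}"

definition int_closure :: "'F::field set \<Rightarrow> 'F set" where
  "int_closure A = {\<alpha> \<in> total_quot A. \<exists>p::'F poly. lead_coeff p = 1 \<and>
      (\<forall>i. coeff p i \<in> A) \<and> poly p \<alpha> = 0}"

definition arf_step :: "'F::field set \<Rightarrow> 'F set" where
  "arf_step A = ring_gen (A \<union> {y * z / x | x y z. x \<in> nzd A \<and> y \<in> A \<and> z \<in> A \<and>
        y / x \<in> int_closure A \<and> z / x \<in> int_closure A})"

definition arf_closure :: "'F::field set \<Rightarrow> 'F set" where
  "arf_closure A = (\<Union>n. (arf_step ^^ n) A)"

text \<open>Tensor product B \<otimes>_A B presented as the free abelian group on B \<times> B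
  (finitely supported int-valued functions) modulo the subgroup generated by the
  biadditivity relations and the A-balancing relations.\<close>
definition single :: "'b \<Rightarrow> 'b \<Rightarrow> int" where
  "single p = (\<lambda>q. if q = p then 1 else 0)"

inductive_set tensor_rel :: "'F::field set \<Rightarrow> 'F set \<Rightarrow> ('F \<times> 'F \<Rightarrow> int) set"
  for A B where
  addL: "b \<in> B \<Longrightarrow> b' \<in> B \<Longrightarrow> c \<in> B \<Longrightarrow>
     (\<lambda>q. single (b + b', c) q - single (b, c) q - single (b', c) q) \<in> tensor_rel A B"
| addR: "b \<in> B \<Longrightarrow> c \<in> B \<Longrightarrow> c' \<in> B \<Longrightarrow>
     (\<lambda>q. single (b, c + c') q - single (b, c) q - single (b, c') q) \<in> tensor_rel A B"
| bal: "a \<in> A \<Longrightarrow> b \<in> B \<Longrightarrow> c \<in> B \<Longrightarrow>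
     (\<lambda>q. single (a * b, c) q - single (b, a * c) q) \<in> tensor_rel A B"
| zero: "(\<lambda>q. 0) \<in> tensor_rel A B"
| plus: "f \<in> tensor_rel A B \<Longrightarrow> g \<in> tensor_rel A B \<Longrightarrow> (\<lambda>q. f q + g q) \<in> tensor_rel A B"
| uminus: "f \<in> tensor_rel A B \<Longrightarrow> (\<lambda>q. - f q) \<in> tensor_rel A B"

text \<open>Strict closure of A in B: \<alpha> \<otimes> 1 = 1 \<otimes> \<alpha> in B \<otimes>_A B.\<close>
definition strict_closure :: "'F::field set \<Rightarrow> 'F set \<Rightarrow> 'F set" where
  "strict_closure A B = {\<alpha> \<in> B. (\<lambda>q. single (\<alpha>, 1) q - single (1, \<alpha>) q) \<in> tensor_rel A B}"

text \<open>k[X,Y] realised as k[X][Y] inside its fraction field k(X,Y).\<close>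
definition emb :: "'k::field poly poly \<Rightarrow> 'k poly poly fract" where
  "emb p = Fract p 1"

definition varX :: "'k::field poly poly fract" where "varX = emb [:[:0, 1:]:]"
definition varY :: "'k::field poly poly fract" where "varY = emb [:0, 1:]"

definition constants :: "'k::field poly poly fract set" where
  "constants = {emb [:[:c:]:] | c. True}"

definition kalg :: "'k::field poly poly fract set \<Rightarrow> 'k poly poly fract set" where
  "kalg G = ring_gen (constants \<union> G)"

end

theory Submission
  imports Defs "HOL-Computational_Algebra.Polynomial_Factorial" "HOL-Computational_Algebra.Field_as_Ring"
    "HOL-Library.Function_Algebras"
begin

text \<open>\<open>R\<^sub>n = k[X\<^sup>n, XY\<^sup>n\<^sup>-\<^sup>1, Y\<^sup>n]\<close> is the subring of the Veronese ring \<open>V\<^sub>n\<close> (monomials of total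
  degree divisible by \<open>n\<close>) whose Y-degrees avoid the gaps of the numerical semigroup
  \<open>\<langle>n - 1, n\<rangle>\<close>. \<open>V\<^sub>n\<close> is the integral closure of \<open>R\<^sub>n\<close>: it is normal because \<open>k[X,Y]\<close> is
  factorial, and each of its elements satisfies an explicit monic equation over \<open>R\<^sub>n\<close>.
  By Lipman's argument the strict closure of \<open>R\<^sub>n\<close> in \<open>V\<^sub>n\<close> is weakly Arf, so it contains the
  weakly Arf closure. Conversely, every \<open>R\<^sub>n\<close>-balanced bilinear form \<open>\<Phi>\<close> on \<open>V\<^sub>n\<close> satisfies
  \<open>\<Phi>(\<alpha>, 1) = \<Phi>(1, \<alpha>)\<close> for \<open>\<alpha>\<close> in the strict closure; suitable forms kill the coefficients of
  \<open>\<alpha>\<close> in low gap degrees, which leaves exactly \<open>R\<^sub>n + \<Sum> R\<^sub>n w\<^sub>i\<close>. Each \<open>w\<^sub>i\<close> is a product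
  \<open>yz/x\<close> from the first Arf step, so the two closures coincide.\<close>

definition coeff2 :: "'k::field poly poly \<Rightarrow> nat \<Rightarrow> nat \<Rightarrow> 'k" where
  "coeff2 p i j = coeff (coeff p j) i"

definition monom2 :: "nat \<Rightarrow> nat \<Rightarrow> 'k::field poly poly" where
  "monom2 i j = monom (monom 1 i) j"

lemma coeff2_add [simp]: "coeff2 (p + q) i j = coeff2 p i j + coeff2 q i j"
  by (simp add: coeff2_def)

lemma coeff2_diff [simp]: "coeff2 (p - q) i j = coeff2 p i j - coeff2 q i j"
  by (simp add: coeff2_def)

lemma coeff2_uminus [simp]: "coeff2 (- p) i j = - coeff2 p i j"
  by (simp add: coeff2_def)

lemma coeff2_0 [simp]: "coeff2 0 i j = 0"
  by (simp add: coeff2_def)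

lemma coeff2_1: "coeff2 1 i j = (if i = 0 \<and> j = 0 then 1 else 0)"
  by (simp add: coeff2_def coeff_1)

lemma coeff2_const: "coeff2 [:[:c:]:] i j = (if i = 0 \<and> j = 0 then c else 0)"
  by (simp add: coeff2_def coeff_pCons split: nat.splits)

lemma coeff2_monom2: "coeff2 (monom2 i j) a b = (if a = i \<and> b = j then 1 else 0)"
  by (simp add: coeff2_def monom2_def coeff_monom)

lemma coeff2_sum: "coeff2 (sum f A) i j = (\<Sum>a\<in>A. coeff2 (f a) i j)"
  by (induction A rule: infinite_finite_induct) simp_all

lemma coeff2_mult:
  "coeff2 (p * q) i j = (\<Sum>j'\<le>j. \<Sum>i'\<le>i. coeff2 p i' j' * coeff2 q (i - i') (j - j'))"
  by (simp add: coeff2_def coeff_mult coeff_sum)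

lemma coeff2_monom2_mult:
  "coeff2 (monom2 a b * q) i j = (if a \<le> i \<and> b \<le> j then coeff2 q (i - a) (j - b) else 0)"
  by (auto simp: coeff2_def monom2_def coeff_monom_mult)

lemma poly2_eqI: "(\<And>i j. coeff2 p i j = coeff2 q i j) \<Longrightarrow> p = q"
  by (auto simp: coeff2_def poly_eq_iff)

lemma monom2_mult: "monom2 i j * monom2 i' j' = (monom2 (i + i') (j + j') :: 'k::field poly poly)"
  by (simp add: monom2_def mult_monom)

lemma monom2_power: "monom2 i j ^ k = (monom2 (k * i) (k * j) :: 'k::field poly poly)"
  by (simp add: monom2_def monom_power mult.commute)

lemma monom2_nonzero [simp]: "monom2 i j \<noteq> 0"
  by (simp add: monom2_def)

lemma monom_monom_eq_const_mult: "monom (monom c i) j = [:[:c:]:] * monom2 i j"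
  by (simp add: monom2_def smult_monom)

lemma poly2_as_sum_of_monoms:
  "p = (\<Sum>j\<le>degree p. \<Sum>i\<le>degree (coeff p j). monom (monom (coeff2 p i j) i) j)"
proof -
  have monom_sum: "monom (sum f A) n = (\<Sum>a\<in>A. monom (f a) n)" for f :: "nat \<Rightarrow> 'a poly" and A n
    by (induction A rule: infinite_finite_induct) (simp_all add: add_monom[symmetric])
  have "p = (\<Sum>j\<le>degree p. monom (\<Sum>i\<le>degree (coeff p j). monom (coeff2 p i j) i) j)"
    by (simp add: coeff2_def poly_as_sum_of_monoms)
  then show ?thesis
    by (simp add: monom_sum)
qed

lemma emb_add: "emb (p + q) = emb p + emb q"
  by (simp add: emb_def)

lemma emb_mult: "emb (p * q) = emb p * emb q"
  by (simp add: emb_def)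

lemma emb_uminus: "emb (- p) = - emb p"
  by (simp add: emb_def)

lemma emb_diff: "emb (p - q) = emb p - emb q"
  by (simp add: emb_def)

lemma emb_0: "emb 0 = 0"
  by (simp add: emb_def Zero_fract_def)

lemma emb_1: "emb 1 = 1"
  by (simp add: emb_def One_fract_def)

lemma emb_inject: "emb p = emb q \<longleftrightarrow> p = q"
  by (simp add: emb_def eq_fract)

lemma emb_eq_0_iff: "emb p = 0 \<longleftrightarrow> p = 0"
  using emb_inject[of p 0] by (simp add: emb_0)

lemma emb_power: "emb (p ^ n) = emb p ^ n"
  by (induction n) (simp_all add: emb_1 emb_mult)

lemma emb_sum: "emb (sum f A) = (\<Sum>a\<in>A. emb (f a))"
  by (induction A rule: infinite_finite_induct) (simp_all add: emb_0 emb_add)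

lemma emb_divide: "emb p * emb q = emb r \<Longrightarrow> q \<noteq> 0 \<Longrightarrow> emb r / emb q = emb p"
  by (metis emb_eq_0_iff nonzero_mult_div_cancel_right)

lemma varX_varY_power: "varX ^ a * varY ^ b = emb (monom2 a b)"
proof -
  have X: "varX = emb (monom2 1 0)" and Y: "varY = emb (monom2 0 1)"
    by (simp_all add: varX_def varY_def monom2_def monom_Suc monom_0 one_pCons)
  have "varX ^ a * varY ^ b = emb (monom2 1 0 ^ a * monom2 0 1 ^ b)"
    unfolding X Y by (simp add: emb_power emb_mult)
  then show ?thesis
    by (simp add: monom2_power monom2_mult)
qed

definition unemb :: "'k::field poly poly fract \<Rightarrow> 'k poly poly" where
  "unemb \<alpha> = (THE p. \<alpha> = emb p)"

lemma unemb_emb [simp]: "unemb (emb p) = p"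
  unfolding unemb_def by (rule the_equality) (auto simp: emb_inject)

lemma unemb_1 [simp]: "unemb 1 = 1"
  using unemb_emb[of 1] by (simp add: emb_1)

definition ring_closed :: "'F::field set \<Rightarrow> bool" where
  "ring_closed S \<longleftrightarrow> 1 \<in> S \<and> (\<forall>a\<in>S. \<forall>b\<in>S. a + b \<in> S \<and> a * b \<in> S) \<and> (\<forall>a\<in>S. - a \<in> S)"

lemma ring_closed_1: "ring_closed S \<Longrightarrow> 1 \<in> S"
  unfolding ring_closed_def by blast

lemma ring_closed_add: "ring_closed S \<Longrightarrow> a \<in> S \<Longrightarrow> b \<in> S \<Longrightarrow> a + b \<in> S"
  unfolding ring_closed_def by blast

lemma ring_closed_mult: "ring_closed S \<Longrightarrow> a \<in> S \<Longrightarrow> b \<in> S \<Longrightarrow> a * b \<in> S"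
  unfolding ring_closed_def by blast

lemma ring_closed_uminus: "ring_closed S \<Longrightarrow> a \<in> S \<Longrightarrow> - a \<in> S"
  unfolding ring_closed_def by blast

lemma ring_closed_0: "ring_closed S \<Longrightarrow> 0 \<in> S"
  unfolding ring_closed_def by (metis add.right_inverse)

lemma ring_closed_diff: "ring_closed S \<Longrightarrow> a \<in> S \<Longrightarrow> b \<in> S \<Longrightarrow> a - b \<in> S"
  unfolding ring_closed_def by (metis diff_conv_add_uminus)

lemma ring_closed_power: "ring_closed S \<Longrightarrow> a \<in> S \<Longrightarrow> a ^ k \<in> S"
  by (induction k) (auto intro: ring_closed_1 ring_closed_mult)

lemma ring_closed_sum: "ring_closed S \<Longrightarrow> (\<And>a. a \<in> A \<Longrightarrow> f a \<in> S) \<Longrightarrow> sum f A \<in> S"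
  by (induction A rule: infinite_finite_induct) (auto intro: ring_closed_0 ring_closed_add)

lemma ring_closed_ring_gen: "ring_closed (ring_gen X)"
  by (auto simp: ring_closed_def intro: ring_gen.intros)

lemma ring_gen_least:
  assumes "ring_closed S" "X \<subseteq> S"
  shows "ring_gen X \<subseteq> S"
proof
  fix x assume "x \<in> ring_gen X"
  then show "x \<in> S"
    by (induction rule: ring_gen.induct) (use assms in \<open>auto simp: ring_closed_def\<close>)
qed

lemma ring_closed_emb_image:
  assumes "1 \<in> S" "\<And>p q. p \<in> S \<Longrightarrow> q \<in> S \<Longrightarrow> p + q \<in> S"
    "\<And>p q. p \<in> S \<Longrightarrow> q \<in> S \<Longrightarrow> p * q \<in> S" "\<And>p. p \<in> S \<Longrightarrow> - p \<in> S"
  shows "ring_closed (emb ` S)"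
  using assms unfolding ring_closed_def
  by (auto simp: emb_1[symmetric] emb_add[symmetric] emb_mult[symmetric] emb_uminus[symmetric])

lemma nzd_ne_0: "x \<in> nzd A \<Longrightarrow> 1 \<in> A \<Longrightarrow> x \<noteq> 0"
  by (auto simp: nzd_def)

lemma nzdI: "x \<in> A \<Longrightarrow> x \<noteq> 0 \<Longrightarrow> x \<in> nzd A"
  by (auto simp: nzd_def)

section \<open>Veronese rings and their gap subrings\<close>

definition veronese :: "nat \<Rightarrow> 'k::field poly poly set" where
  "veronese n = {p. \<forall>i j. coeff2 p i j \<noteq> 0 \<longrightarrow> n dvd i + j}"

text \<open>\<open>gap_set G\<close>: the Y-degrees outside \<open>G\<close> form a submonoid of \<open>\<nat>\<close>.\<close>

definition gap_subring :: "nat \<Rightarrow> nat set \<Rightarrow> 'k::field poly poly set" where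
  "gap_subring n G = {p \<in> veronese n. \<forall>j\<in>G. coeff p j = 0}"

definition gap_set :: "nat set \<Rightarrow> bool" where
  "gap_set G \<longleftrightarrow> 0 \<notin> G \<and> (\<forall>j\<in>G. \<forall>i\<le>j. i \<in> G \<or> j - i \<in> G)"

lemma veroneseI: "(\<And>i j. coeff2 p i j \<noteq> 0 \<Longrightarrow> n dvd i + j) \<Longrightarrow> p \<in> veronese n"
  by (auto simp: veronese_def)

lemma veroneseD: "p \<in> veronese n \<Longrightarrow> \<not> n dvd i + j \<Longrightarrow> coeff2 p i j = 0"
  by (auto simp: veronese_def)

lemma veronese_add: "p \<in> veronese n \<Longrightarrow> q \<in> veronese n \<Longrightarrow> p + q \<in> veronese n"
  by (rule veroneseI) (metis veroneseD coeff2_add add.right_neutral)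

lemma veronese_uminus: "p \<in> veronese n \<Longrightarrow> - p \<in> veronese n"
  by (rule veroneseI) (metis veroneseD coeff2_uminus neg_equal_0_iff_equal)

lemma veronese_diff: "p \<in> veronese n \<Longrightarrow> q \<in> veronese n \<Longrightarrow> p - q \<in> veronese n"
  by (rule veroneseI) (metis veroneseD coeff2_diff diff_zero)

lemma veronese_1: "1 \<in> veronese n"
  by (rule veroneseI) (auto simp: coeff2_1 split: if_splits)

lemma veronese_const: "[:[:c:]:] \<in> veronese n"
  by (rule veroneseI) (auto simp: coeff2_const split: if_splits)

lemma monom2_in_veronese: "n dvd i + j \<Longrightarrow> monom2 i j \<in> veronese n"
  by (rule veroneseI) (auto simp: coeff2_monom2 split: if_splits)

lemma veronese_mult:
  assumes p: "p \<in> veronese n" and q: "q \<in> veronese n"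
  shows "p * q \<in> veronese n"
proof (rule veroneseI)
  fix i j assume nz: "coeff2 (p * q) i j \<noteq> 0"
  show "n dvd i + j"
  proof (rule ccontr)
    assume not_dvd: "\<not> n dvd i + j"
    have "coeff2 p i' j' * coeff2 q (i - i') (j - j') = 0" if "j' \<le> j" "i' \<le> i" for i' j'
    proof -
      have "i + j = (i' + j') + ((i - i') + (j - j'))" using that by simp
      then have "\<not> n dvd i' + j' \<or> \<not> n dvd (i - i') + (j - j')"
        using not_dvd by (metis dvd_add)
      then show ?thesis using p q by (auto simp: veroneseD)
    qed
    then have "coeff2 (p * q) i j = 0"
      unfolding coeff2_mult by (intro sum.neutral ballI) auto
    with nz show False by simp
  qed
qed

lemma veronese_power: "p \<in> veronese n \<Longrightarrow> p ^ k \<in> veronese n"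
  by (induction k) (simp_all add: veronese_1 veronese_mult)

definition veronese_part :: "nat \<Rightarrow> 'k::field poly poly \<Rightarrow> 'k poly poly" where
  "veronese_part n p = (\<Sum>j\<le>degree p. \<Sum>i\<le>degree (coeff p j).
      monom (monom (if n dvd i + j then coeff2 p i j else 0) i) j)"

lemma coeff2_veronese_part:
  "coeff2 (veronese_part n p) i j = (if n dvd i + j then coeff2 p i j else 0)"
proof -
  have coeff2_monom_monom: "coeff2 (monom (monom c a) b) i j = (if i = a \<and> j = b then c else 0)"
    for c :: 'a and a b
    by (simp add: coeff2_def coeff_monom)
  have "coeff2 (veronese_part n p) i j = (\<Sum>b\<le>degree p. if j = b then (\<Sum>a\<le>degree (coeff p b).
           if i = a then (if n dvd a + b then coeff2 p a b else 0) else 0) else 0)"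
    unfolding veronese_part_def coeff2_sum coeff2_monom_monom by (intro sum.cong refl) auto
  also have "\<dots> = (if j \<le> degree p \<and> i \<le> degree (coeff p j)
                     then (if n dvd i + j then coeff2 p i j else 0) else 0)"
    by (simp only: sum.delta' finite_atMost atMost_iff) auto
  also have "\<dots> = (if n dvd i + j then coeff2 p i j else 0)"
    by (auto simp: coeff2_def coeff_eq_0 not_le)
  finally show ?thesis .
qed

lemma veronese_part_in_veronese: "veronese_part n p \<in> veronese n"
  by (rule veroneseI) (simp add: coeff2_veronese_part split: if_splits)

lemma veronese_cancel:
  assumes fx: "f * x \<in> veronese n" and x: "x \<in> veronese n" "x \<noteq> 0"
  shows "f \<in> veronese n"
proof -
  define g where "g = f - veronese_part n f"
  have coeff2_g: "coeff2 g i j = (if n dvd i + j then 0 else coeff2 f i j)" for i j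
    by (simp add: g_def coeff2_veronese_part)
  have "g * x = f * x - veronese_part n f * x"
    by (simp add: g_def algebra_simps)
  then have gx: "g * x \<in> veronese n"
    using fx x by (simp add: veronese_diff veronese_mult veronese_part_in_veronese)
  \<comment> \<open>all monomials of \<open>g\<close> have total degree \<open>\<not>\<equiv> 0 (mod n)\<close>, those of \<open>x\<close> degree \<open>\<equiv> 0\<close>\<close>
  have "g * x = 0"
  proof (rule poly2_eqI)
    fix i j
    show "coeff2 (g * x) i j = coeff2 0 i j"
    proof (cases "n dvd i + j")
      case False
      then show ?thesis using gx by (simp add: veroneseD)
    next
      case True
      have "coeff2 g i' j' * coeff2 x (i - i') (j - j') = 0" if "j' \<le> j" "i' \<le> i" for i' j'
      proof (cases "n dvd (i - i') + (j - j')")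
        case True
        moreover have "i + j = (i' + j') + ((i - i') + (j - j'))" using that by simp
        ultimately have "n dvd i' + j'"
          using \<open>n dvd i + j\<close> by (metis dvd_add_left_iff)
        then show ?thesis by (simp add: coeff2_g)
      qed (simp add: veroneseD[OF x(1)])
      then show ?thesis unfolding coeff2_mult by (simp add: sum.neutral)
    qed
  qed
  then have "f = veronese_part n f"
    using x by (simp add: g_def)
  then show ?thesis
    by (metis veronese_part_in_veronese)
qed

lemma ring_closed_veronese: "ring_closed (emb ` veronese n)"
  by (intro ring_closed_emb_image veronese_1 veronese_add veronese_mult veronese_uminus)

lemma gap_subring_subset_veronese: "gap_subring n G \<subseteq> veronese n"
  by (auto simp: gap_subring_def)

lemma coeff2_gap_subring:
  "p \<in> gap_subring n G \<Longrightarrow> \<not> n dvd i + j \<or> j \<in> G \<Longrightarrow> coeff2 p i j = 0"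
  by (auto simp: gap_subring_def coeff2_def dest: veroneseD[unfolded coeff2_def])

lemma monom2_in_gap_subring: "n dvd i + j \<Longrightarrow> j \<notin> G \<Longrightarrow> monom2 i j \<in> gap_subring n G"
  using monom2_in_veronese[of n i j] by (auto simp: gap_subring_def monom2_def coeff_monom)

lemma ring_closed_gap_subring:
  assumes G: "gap_set G"
  shows "ring_closed (emb ` gap_subring n G :: 'k::field poly poly fract set)"
proof (rule ring_closed_emb_image)
  fix p q :: "'k poly poly" assume p: "p \<in> gap_subring n G" and q: "q \<in> gap_subring n G"
  have "coeff (p * q) j = 0" if j: "j \<in> G" for j
  proof -
    have "coeff p i * coeff q (j - i) = 0" if "i \<le> j" for i
      using G j p q that by (auto simp: gap_subring_def gap_set_def)
    then show ?thesis unfolding coeff_mult by (intro sum.neutral) auto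
  qed
  then show "p * q \<in> gap_subring n G"
    using p q by (auto simp: gap_subring_def veronese_mult)
  show "p + q \<in> gap_subring n G"
    using p q by (auto simp: gap_subring_def veronese_add)
next
  show "1 \<in> gap_subring n G"
    using G veronese_1 by (auto simp: gap_subring_def gap_set_def coeff_1) (metis neq0_conv)
  show "- p \<in> gap_subring n G" if "p \<in> gap_subring n G" for p
    using that by (auto simp: gap_subring_def veronese_uminus)
qed

lemma kalg_eq_gap_subring:
  fixes H :: "'k::field poly poly fract set"
  assumes G: "gap_set G" and H: "H \<subseteq> emb ` gap_subring n G"
    and monoms: "\<And>i j. n dvd i + j \<Longrightarrow> j \<notin> G \<Longrightarrow> emb (monom2 i j) \<in> kalg H"
  shows "kalg H = emb ` gap_subring n G"
proof
  have "[:[:c:]:] \<in> gap_subring n G" for c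
    using G veronese_const by (auto simp: gap_subring_def gap_set_def coeff_pCons split: nat.splits)
  then have "constants \<subseteq> emb ` gap_subring n G"
    by (auto simp: constants_def)
  then show "kalg H \<subseteq> emb ` gap_subring n G"
    unfolding kalg_def using H by (intro ring_gen_least ring_closed_gap_subring G) auto
next
  have kalg: "ring_closed (kalg H)"
    by (simp add: kalg_def ring_closed_ring_gen)
  show "emb ` gap_subring n G \<subseteq> kalg H"
  proof
    fix x :: "'k poly poly fract" assume "x \<in> emb ` gap_subring n G"
    then obtain p where p: "p \<in> gap_subring n G" and x: "x = emb p" by auto
    have monomial: "emb (monom (monom (coeff2 p i j) i) j) \<in> kalg H" for i j
    proof (cases "coeff2 p i j = 0")
      case True
      then show ?thesis using ring_closed_0[OF kalg] by (simp add: emb_0)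
    next
      case False
      then have "emb (monom2 i j) \<in> kalg H"
        using p coeff2_gap_subring[of p n G i j] by (intro monoms) auto
      moreover have "emb [:[:coeff2 p i j:]:] \<in> kalg H"
        unfolding kalg_def constants_def by (rule ring_gen.base) auto
      ultimately show ?thesis
        unfolding monom_monom_eq_const_mult emb_mult by (intro ring_closed_mult[OF kalg])
    qed
    have "x = (\<Sum>j\<le>degree p. \<Sum>i\<le>degree (coeff p j). emb (monom (monom (coeff2 p i j) i) j))"
      using x poly2_as_sum_of_monoms[of p] by (metis (no_types, lifting) emb_sum sum.cong)
    then show "x \<in> kalg H"
      by (simp add: ring_closed_sum[OF kalg] monomial)
  qed
qed

text \<open>The gaps of the numerical semigroup generated by \<open>n - 1\<close> and \<open>n\<close>: the Y-degrees that
  do not occur in \<open>k[X\<^sup>n, X Y\<^sup>n\<^sup>-\<^sup>1, Y\<^sup>n]\<close>.\<close>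

definition gaps :: "nat \<Rightarrow> nat set" where
  "gaps n = - {(n - 1) * u + n * v | u v. True}"

lemma gap_set_gaps: "gap_set (gaps n)"
proof -
  have "j \<notin> gaps n" if ij: "i \<le> j" and i: "i \<notin> gaps n" and ji: "j - i \<notin> gaps n" for i j
  proof -
    obtain u v where u: "i = (n - 1) * u + n * v"
      using i by (auto simp: gaps_def)
    obtain u' v' where u': "j - i = (n - 1) * u' + n * v'"
      using ji by (auto simp: gaps_def)
    have "j = i + (j - i)"
      using ij by simp
    also have "\<dots> = (n - 1) * u + n * v + ((n - 1) * u' + n * v')"
      unfolding u' by (simp only: u)
    also have "\<dots> = (n - 1) * (u + u') + n * (v + v')"
      by (simp only: distrib_left ac_simps)
    finally show ?thesis by (auto simp: gaps_def)
  qed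
  moreover have "0 \<notin> gaps n"
    by (auto simp: gaps_def)
  ultimately show ?thesis
    unfolding gap_set_def by blast
qed

lemma gaps_4: "gaps 4 = {1, 2, 5}"
proof -
  have "(\<exists>u v::nat. j = 3 * u + 4 * v) \<longleftrightarrow> j \<noteq> 1 \<and> j \<noteq> 2 \<and> j \<noteq> 5" for j
    by presburger
  then show ?thesis by (auto simp: gaps_def)
qed

lemma gaps_5: "gaps 5 = {1, 2, 3, 6, 7, 11}"
proof -
  have "(\<exists>u v::nat. j = 4 * u + 5 * v) \<longleftrightarrow>
      j \<noteq> 1 \<and> j \<noteq> 2 \<and> j \<noteq> 3 \<and> j \<noteq> 6 \<and> j \<noteq> 7 \<and> j \<noteq> 11" for j
    by presburger
  then show ?thesis by (auto simp: gaps_def)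
qed

lemma not_in_gaps_reduced:
  assumes n: "0 < n" and j: "j \<notin> gaps n"
  obtains u v where "u < n" "j = (n - 1) * u + n * v"
proof -
  obtain u v where j0: "j = (n - 1) * u + n * v"
    using j by (auto simp: gaps_def)
  \<comment> \<open>\<open>n\<close> summands \<open>n - 1\<close> can be traded for \<open>n - 1\<close> summands \<open>n\<close>\<close>
  have "u = n * (u div n) + u mod n"
    by simp
  then have "(n - 1) * u = (n - 1) * (u mod n) + n * ((n - 1) * (u div n))"
    by (metis distrib_left mult.left_commute add.commute)
  then have "j = (n - 1) * (u mod n) + n * (v + (n - 1) * (u div n))"
    using j0 by (simp only: distrib_left ac_simps)
  moreover have "u mod n < n"
    using n by simp
  ultimately show thesis
    by (rule that[rotated])
qed

lemma kalg_veronese_generators: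
  assumes n: "0 < n"
  shows "kalg {varX ^ n, varX * varY ^ (n - 1), varY ^ n} =
    (emb ` gap_subring n (gaps n) :: 'k::field poly poly fract set)"
proof (rule kalg_eq_gap_subring[OF gap_set_gaps])
  let ?H = "{varX ^ n, varX * varY ^ (n - 1), varY ^ n} :: 'k poly poly fract set"
  have X: "varX ^ n = emb (monom2 n 0)" and XY: "varX * varY ^ (n - 1) = emb (monom2 1 (n - 1))"
    and Y: "varY ^ n = emb (monom2 0 n)"
    using varX_varY_power[of n 0] varX_varY_power[of 1 "n - 1"] varX_varY_power[of 0 n] by simp_all
  have "0 = (n - 1) * 0 + n * 0" "n - 1 = (n - 1) * 1 + n * 0" "n = (n - 1) * 0 + n * 1"
    by simp_all
  then have "0 \<notin> gaps n" "n - 1 \<notin> gaps n" "n \<notin> gaps n"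
    unfolding gaps_def Compl_iff mem_Collect_eq by blast+
  then show "?H \<subseteq> emb ` gap_subring n (gaps n)"
    unfolding X XY Y using n by (auto intro!: imageI monom2_in_gap_subring)
  fix i j assume ij: "n dvd i + j" "j \<notin> gaps n"
  then obtain u v where u: "u < n" and j: "j = (n - 1) * u + n * v"
    using not_in_gaps_reduced n by blast
  have "u + j = n * (u + v)"
    using n by (cases n) (simp_all add: j algebra_simps)
  then have "(i + j) mod n = (u + j) mod n"
    using ij(1) by simp
  then have "i mod n = u mod n"
    by (simp add: nat_mod_eq_iff)
  then have "i mod n = u"
    using u by simp
  then have i: "i = n * (i div n) + u"
    using div_mult_mod_eq[of i n] by (simp add: mult.commute)
  have "monom2 n 0 ^ (i div n) * monom2 1 (n - 1) ^ u * monom2 0 n ^ v =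
      (monom2 (n * (i div n) + u) ((n - 1) * u + n * v) :: 'k poly poly)"
    by (simp only: monom2_power monom2_mult) (simp add: mult.commute)
  then have "emb (monom2 i j) =
      (emb (monom2 n 0 ^ (i div n) * monom2 1 (n - 1) ^ u * monom2 0 n ^ v) :: 'k poly poly fract)"
    by (simp only: flip: i j)
  also have "\<dots> = (varX ^ n) ^ (i div n) * (varX * varY ^ (n - 1)) ^ u * (varY ^ n) ^ v"
    unfolding X XY Y by (simp only: emb_mult emb_power)
  also have "\<dots> \<in> kalg ?H"
  proof -
    have "ring_closed (kalg ?H)" "?H \<subseteq> kalg ?H"
      by (auto simp: kalg_def ring_closed_ring_gen intro: ring_gen.base)
    then show ?thesis
      by (simp add: ring_closed_mult ring_closed_power)
  qed
  finally show "emb (monom2 i j) \<in> kalg ?H" .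
qed

section \<open>The integral closure of a gap subring\<close>

lemma integrally_closed_factorial:
  fixes p q :: "'a::factorial_ring_gcd"
  assumes q: "q \<noteq> 0" and eq: "p ^ n + (\<Sum>i<n. c i * p ^ i * q ^ (n - i)) = 0"
  shows "q dvd p"
proof -
  define g where "g = gcd p q"
  have g0: "g \<noteq> 0" using q by (simp add: g_def)
  obtain p' q' where pq: "p = p' * g" "q = q' * g" and cop: "coprime p' q'"
    using gcd_coprime_exists[OF g0[unfolded g_def]] unfolding g_def by blast
  have "g ^ n * (\<Sum>i<n. c i * p' ^ i * q' ^ (n - i)) = (\<Sum>i<n. c i * p ^ i * q ^ (n - i))"
    unfolding sum_distrib_left
  proof (rule sum.cong)
    fix i assume "i \<in> {..<n}"
    then have gn: "g ^ n = g ^ i * g ^ (n - i)" by (simp flip: power_add)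
    show "g ^ n * (c i * p' ^ i * q' ^ (n - i)) = c i * p ^ i * q ^ (n - i)"
      unfolding pq gn by (simp add: power_mult_distrib ac_simps)
  qed simp
  moreover have "g ^ n * p' ^ n = p ^ n"
    using pq by (simp add: power_mult_distrib algebra_simps)
  ultimately have "g ^ n * (p' ^ n + (\<Sum>i<n. c i * p' ^ i * q' ^ (n - i))) = 0"
    using eq by (simp add: distrib_left)
  then have eq': "p' ^ n + (\<Sum>i<n. c i * p' ^ i * q' ^ (n - i)) = 0"
    using g0 by simp
  have "q' dvd (\<Sum>i<n. c i * p' ^ i * q' ^ (n - i))"
  proof (rule dvd_sum)
    fix i assume "i \<in> {..<n}"
    then have "q' ^ (n - i) = q' * q' ^ (n - i - 1)"
      by (metis Suc_diff_Suc lessThan_iff minus_nat.diff_0 power_Suc diff_Suc_1 zero_less_diff)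
    then show "q' dvd c i * p' ^ i * q' ^ (n - i)" by simp
  qed
  then have "q' dvd p' ^ n"
    using eq' by (metis add.commute add_eq_0_iff dvd_minus_iff)
  moreover have "coprime (p' ^ n) q'"
    using cop by simp
  ultimately have "is_unit q'"
    using coprime_absorb_right by blast
  then show ?thesis
    using pq by (simp add: mult_dvd_mono unit_imp_dvd)
qed

text \<open>A copy of an arbitrary field with the trivial gcd structure, so that bivariate polynomials
  over it form a \<open>factorial_ring_gcd\<close>.\<close>

typedef ('a::field) gcd_field = "UNIV :: 'a set" morphisms rep_gcd_field abs_gcd_field
  by auto

setup_lifting type_definition_gcd_field

instantiation gcd_field :: (field) field
begin
lift_definition zero_gcd_field :: "'a gcd_field" is 0 .
lift_definition one_gcd_field :: "'a gcd_field" is 1 .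
lift_definition plus_gcd_field :: "'a gcd_field \<Rightarrow> 'a gcd_field \<Rightarrow> 'a gcd_field" is "(+)" .
lift_definition minus_gcd_field :: "'a gcd_field \<Rightarrow> 'a gcd_field \<Rightarrow> 'a gcd_field" is "(-)" .
lift_definition uminus_gcd_field :: "'a gcd_field \<Rightarrow> 'a gcd_field" is "uminus" .
lift_definition times_gcd_field :: "'a gcd_field \<Rightarrow> 'a gcd_field \<Rightarrow> 'a gcd_field" is "(*)" .
lift_definition inverse_gcd_field :: "'a gcd_field \<Rightarrow> 'a gcd_field" is "inverse" .
lift_definition divide_gcd_field :: "'a gcd_field \<Rightarrow> 'a gcd_field \<Rightarrow> 'a gcd_field" is "(/)" .
instance by standard (transfer; auto simp: field_simps)+
end

instantiation gcd_field :: (field)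
  "{unique_euclidean_ring, normalization_euclidean_semiring, normalization_semidom_multiplicative}"
begin
definition [simp]: "normalize_gcd_field = (normalize_field :: 'a gcd_field \<Rightarrow> _)"
definition [simp]: "unit_factor_gcd_field = (unit_factor_field :: 'a gcd_field \<Rightarrow> _)"
definition [simp]: "modulo_gcd_field = (mod_field :: 'a gcd_field \<Rightarrow> _)"
definition [simp]: "euclidean_size_gcd_field = (euclidean_size_field :: 'a gcd_field \<Rightarrow> _)"
definition [simp]: "division_segment (x :: 'a gcd_field) = 1"
instance
  by standard (simp_all add: dvd_field_iff field_split_simps split: if_splits)
end

instantiation gcd_field :: (field) euclidean_ring_gcd
begin
definition gcd_gcd_field :: "'a gcd_field \<Rightarrow> 'a gcd_field \<Rightarrow> 'a gcd_field" where
  "gcd_gcd_field = Euclidean_Algorithm.gcd"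
definition lcm_gcd_field :: "'a gcd_field \<Rightarrow> 'a gcd_field \<Rightarrow> 'a gcd_field" where
  "lcm_gcd_field = Euclidean_Algorithm.lcm"
definition Gcd_gcd_field :: "'a gcd_field set \<Rightarrow> 'a gcd_field" where
  "Gcd_gcd_field = Euclidean_Algorithm.Gcd"
definition Lcm_gcd_field :: "'a gcd_field set \<Rightarrow> 'a gcd_field" where
  "Lcm_gcd_field = Euclidean_Algorithm.Lcm"
instance
  by standard (simp_all add: gcd_gcd_field_def lcm_gcd_field_def Gcd_gcd_field_def Lcm_gcd_field_def)
end

instance gcd_field :: (field) field_gcd ..

definition is_ring_hom :: "('a::comm_ring_1 \<Rightarrow> 'b::comm_ring_1) \<Rightarrow> bool" where
  "is_ring_hom f \<longleftrightarrow> f 0 = 0 \<and> f 1 = 1 \<and> (\<forall>a b. f (a + b) = f a + f b) \<and> (\<forall>a b. f (a * b) = f a * f b)"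

lemma is_ring_homD:
  assumes "is_ring_hom f"
  shows "f 0 = 0" "f 1 = 1" "f (a + b) = f a + f b" "f (a * b) = f a * f b"
  using assms by (simp_all add: is_ring_hom_def)

lemma is_ring_hom_sum: "is_ring_hom f \<Longrightarrow> f (sum g A) = (\<Sum>a\<in>A. f (g a))"
  by (induction A rule: infinite_finite_induct) (simp_all add: is_ring_homD[of f])

lemma is_ring_hom_power: "is_ring_hom f \<Longrightarrow> f (a ^ n) = f a ^ n"
  by (induction n) (simp_all add: is_ring_homD[of f])

lemma is_ring_hom_map_poly:
  assumes f: "is_ring_hom f"
  shows "is_ring_hom (map_poly f)"
proof -
  have "map_poly f (p + q) = map_poly f p + map_poly f q" for p q
    by (rule poly_eqI) (simp add: coeff_map_poly is_ring_homD[OF f])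
  moreover have "map_poly f (p * q) = map_poly f p * map_poly f q" for p q
    by (rule poly_eqI) (simp add: coeff_map_poly coeff_mult is_ring_hom_sum[OF f] is_ring_homD[OF f])
  ultimately show ?thesis
    using is_ring_homD[OF f] by (simp add: is_ring_hom_def)
qed

definition to_gcd_poly2 :: "'k::field poly poly \<Rightarrow> 'k gcd_field poly poly" where
  "to_gcd_poly2 = map_poly (map_poly abs_gcd_field)"

definition of_gcd_poly2 :: "'k::field gcd_field poly poly \<Rightarrow> 'k poly poly" where
  "of_gcd_poly2 = map_poly (map_poly rep_gcd_field)"

lemma is_ring_hom_abs_gcd_field: "is_ring_hom abs_gcd_field"
  unfolding is_ring_hom_def
  by (simp add: rep_gcd_field_inject[symmetric] abs_gcd_field_inverse zero_gcd_field.rep_eq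
      one_gcd_field.rep_eq plus_gcd_field.rep_eq times_gcd_field.rep_eq)

lemma is_ring_hom_rep_gcd_field: "is_ring_hom rep_gcd_field"
  unfolding is_ring_hom_def
  by (simp add: zero_gcd_field.rep_eq one_gcd_field.rep_eq plus_gcd_field.rep_eq times_gcd_field.rep_eq)

lemma is_ring_hom_to_gcd_poly2: "is_ring_hom to_gcd_poly2"
  unfolding to_gcd_poly2_def by (intro is_ring_hom_map_poly is_ring_hom_abs_gcd_field)

lemma is_ring_hom_of_gcd_poly2: "is_ring_hom of_gcd_poly2"
  unfolding of_gcd_poly2_def by (intro is_ring_hom_map_poly is_ring_hom_rep_gcd_field)

lemma of_to_gcd_poly2 [simp]: "of_gcd_poly2 (to_gcd_poly2 p) = p"
proof -
  have rep_abs: "map_poly rep_gcd_field (map_poly abs_gcd_field x) = x" for x :: "'a poly"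
    by (subst map_poly_map_poly)
      (simp_all add: is_ring_homD(1)[OF is_ring_hom_abs_gcd_field] zero_gcd_field.rep_eq comp_def
        abs_gcd_field_inverse)
  show ?thesis
    unfolding of_gcd_poly2_def to_gcd_poly2_def
    by (subst map_poly_map_poly) (simp_all add: zero_gcd_field.rep_eq comp_def rep_abs)
qed

lemma integrally_closed_poly2:
  fixes p q :: "'k::field poly poly"
  assumes q: "q \<noteq> 0" and eq: "p ^ n + (\<Sum>i<n. c i * p ^ i * q ^ (n - i)) = 0"
  shows "q dvd p"
proof -
  note hom = is_ring_hom_to_gcd_poly2
  have "to_gcd_poly2 q \<noteq> 0"
    using q of_to_gcd_poly2 is_ring_homD(1)[OF is_ring_hom_of_gcd_poly2] by metis
  moreover have "to_gcd_poly2 p ^ n + (\<Sum>i<n. to_gcd_poly2 (c i) * to_gcd_poly2 p ^ i *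
      to_gcd_poly2 q ^ (n - i)) = 0"
    using arg_cong[OF eq, of to_gcd_poly2]
    by (simp add: is_ring_homD[OF hom] is_ring_hom_sum[OF hom] is_ring_hom_power[OF hom])
  ultimately have "to_gcd_poly2 q dvd to_gcd_poly2 p"
    by (rule integrally_closed_factorial)
  then obtain h where "to_gcd_poly2 p = to_gcd_poly2 q * h" ..
  then have "of_gcd_poly2 (to_gcd_poly2 p) = of_gcd_poly2 (to_gcd_poly2 q) * of_gcd_poly2 h"
    by (simp add: is_ring_homD[OF is_ring_hom_of_gcd_poly2])
  then show ?thesis
    by simp
qed

lemma Fract_power: "Fract a b ^ i = Fract (a ^ i) (b ^ i)"
  by (induction i) (simp_all add: One_fract_def)

lemma integral_over_poly2_in_poly2:
  fixes \<alpha> :: "'k::field poly poly fract"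
  assumes lc: "lead_coeff P = 1" and cP: "\<forall>i. coeff P i \<in> range emb" and root: "poly P \<alpha> = 0"
  shows "\<alpha> \<in> range emb"
proof -
  obtain a b where ab: "\<alpha> = Fract a b" "b \<noteq> 0" by (cases \<alpha>) auto
  have "\<forall>i. \<exists>x. coeff P i = emb x"
    using cP by blast
  then obtain c where c: "\<And>i. coeff P i = emb (c i)"
    by metis
  define n where "n = degree P"
  have cn: "c n = 1"
    using lc c[of n] by (simp add: n_def emb_1[symmetric] emb_inject)
  \<comment> \<open>clearing the denominators \<open>b\<^sup>n\<close> of \<open>P(a/b) = 0\<close>\<close>
  have cleared: "emb (b ^ n) * \<alpha> ^ i = emb (a ^ i * b ^ (n - i))" if "i \<le> n" for i
  proof -
    have bn: "b ^ n = b ^ i * b ^ (n - i)"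
      using that by (simp flip: power_add)
    have "emb (b ^ n) * \<alpha> ^ i = Fract (b ^ i * (b ^ (n - i) * a ^ i)) (b ^ i * 1)"
      by (simp add: ab emb_def Fract_power bn ac_simps)
    also have "\<dots> = Fract (b ^ (n - i) * a ^ i) 1"
      by (rule mult_fract_cancel) (simp add: ab)
    finally show ?thesis by (simp add: emb_def ac_simps)
  qed
  have "0 = emb (b ^ n) * poly P \<alpha>"
    using root by simp
  also have "\<dots> = (\<Sum>i\<le>n. emb (c i) * (emb (b ^ n) * \<alpha> ^ i))"
    by (simp add: poly_altdef n_def sum_distrib_left c ac_simps)
  also have "\<dots> = emb (\<Sum>i\<le>n. c i * (a ^ i * b ^ (n - i)))"
    by (simp add: cleared emb_mult emb_sum)
  finally have "(\<Sum>i\<le>n. c i * (a ^ i * b ^ (n - i))) = 0"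
    by (simp add: emb_eq_0_iff)
  moreover have "(\<Sum>i\<le>n. c i * (a ^ i * b ^ (n - i))) = (\<Sum>i<n. c i * a ^ i * b ^ (n - i)) + a ^ n"
    unfolding lessThan_Suc_atMost[symmetric] sum.lessThan_Suc by (simp add: cn mult.assoc)
  ultimately have "a ^ n + (\<Sum>i<n. c i * a ^ i * b ^ (n - i)) = 0"
    by (simp add: add.commute)
  then obtain k where k: "a = b * k"
    using integrally_closed_poly2[OF ab(2)] by blast
  have "\<alpha> = Fract (b * k) (b * 1)"
    using ab k by simp
  also have "\<dots> = emb k"
    using ab(2) mult_fract_cancel[of b k 1] by (simp add: emb_def)
  finally show ?thesis by simp
qed

lemma int_closure_subset_veronese:
  fixes A :: "'k::field poly poly fract set"
  assumes A: "A \<subseteq> emb ` veronese n" and one: "1 \<in> A"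
  shows "int_closure A \<subseteq> emb ` veronese n"
proof
  fix \<alpha> assume \<alpha>: "\<alpha> \<in> int_closure A"
  then obtain x y where xy: "\<alpha> = y / x" "x \<in> nzd A" "y \<in> A"
    by (auto simp: int_closure_def total_quot_def)
  obtain P where P: "lead_coeff P = 1" "\<forall>i. coeff P i \<in> A" "poly P \<alpha> = 0"
    using \<alpha> by (auto simp: int_closure_def)
  have "\<forall>i. coeff P i \<in> range emb"
    using P(2) A by blast
  then obtain f where f: "\<alpha> = emb f"
    using integral_over_poly2_in_poly2[OF P(1) _ P(3)] by blast
  have x0: "x \<noteq> 0"
    using nzd_ne_0[OF xy(2) one] .
  have "x \<in> A"
    using xy(2) by (simp add: nzd_def)
  then obtain x' where x': "x = emb x'" "x' \<in> veronese n"
    using A by blast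
  obtain y' where y': "y = emb y'" "y' \<in> veronese n"
    using A xy(3) by blast
  have "x' \<noteq> 0"
    using x0 x'(1) emb_0 by metis
  have "emb (f * x') = emb y'"
    using f xy(1) x' y' x0 by (simp add: emb_mult field_simps)
  then have "f * x' \<in> veronese n"
    using y'(2) by (simp add: emb_inject)
  then have "f \<in> veronese n"
    using veronese_cancel x'(2) \<open>x' \<noteq> 0\<close> by blast
  then show "\<alpha> \<in> emb ` veronese n"
    using f by simp
qed

lemma coeff_power_eq_0_below: "coeff v 0 = 0 \<Longrightarrow> j < k \<Longrightarrow> coeff (v ^ k) j = 0"
proof -
  assume "coeff v 0 = 0" "j < k"
  moreover obtain w where "v = pCons (coeff v 0) w"
    by (cases v) simp
  ultimately have "v = monom 1 1 * w"
    by (simp add: monom_Suc)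
  then have "v ^ k = monom 1 k * w ^ k"
    by (simp add: power_mult_distrib monom_power)
  then show ?thesis
    using \<open>j < k\<close> by (simp add: coeff_monom_mult)
qed

lemma coeff_power_in_ring:
  assumes S: "ring_closed S" and p: "\<forall>i. coeff p i \<in> S"
  shows "coeff (p ^ k) i \<in> S"
proof (induction k arbitrary: i)
  case 0
  then show ?case using ring_closed_1[OF S] ring_closed_0[OF S] by (simp add: coeff_1)
next
  case (Suc k)
  then show ?case
    unfolding power_Suc coeff_mult using S p by (auto intro: ring_closed_sum ring_closed_mult)
qed

text \<open>Write \<open>f = a + v\<close> with \<open>a\<close> in the gap subring and \<open>v\<close> supported in the Y-degrees \<open>G\<close>;
  then \<open>f\<close> is a root of \<open>(T - a)\<^sup>K - v\<^sup>K\<close>, and \<open>v\<^sup>K\<close> lies in the gap subring once \<open>K > G\<close>.\<close>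

lemma veronese_subset_int_closure:
  fixes n K :: nat and G :: "nat set"
  assumes G: "gap_set G" and K: "\<forall>j\<in>G. j < K" "n dvd K" "0 < K"
  shows "emb ` veronese n \<subseteq> (int_closure (emb ` gap_subring n G) :: 'k::field poly poly fract set)"
proof
  fix \<alpha> :: "'k poly poly fract" assume "\<alpha> \<in> emb ` veronese n"
  then obtain f where f: "\<alpha> = emb f" "f \<in> veronese n" by blast
  let ?R = "emb ` gap_subring n G :: 'k poly poly fract set"
  have R: "ring_closed ?R"
    using G by (rule ring_closed_gap_subring)
  have fin: "finite G"
    using K(1) by (metis finite_nat_set_iff_bounded)
  define m :: "'k poly poly" where "m = monom2 0 K"
  have m: "m \<in> gap_subring n G"
    unfolding m_def using K by (intro monom2_in_gap_subring) auto
  have mf: "m * f \<in> gap_subring n G"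
    using veronese_mult[OF _ f(2), of m] m K(1)
    by (auto simp: gap_subring_def m_def monom2_def coeff_monom_mult)
  have "\<alpha> = emb (m * f) / emb m" "emb m \<in> nzd ?R"
    using m by (auto simp: f emb_mult emb_eq_0_iff m_def intro: nzdI)
  then have total: "\<alpha> \<in> total_quot ?R"
    unfolding total_quot_def using mf by blast
  define v where "v = (\<Sum>j\<in>G. monom (coeff f j) j)"
  have coeff_v: "coeff v j = (if j \<in> G then coeff f j else 0)" for j
    unfolding v_def coeff_sum coeff_monom using fin by (simp add: sum.delta)
  then have "coeff2 v i j = (if j \<in> G then coeff2 f i j else 0)" for i j
    by (simp add: coeff2_def)
  then have v: "v \<in> veronese n"
    by (intro veroneseI) (metis veroneseD f(2))
  define a where "a = f - v"
  have a: "a \<in> gap_subring n G"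
    unfolding gap_subring_def a_def using veronese_diff[OF f(2) v] by (simp add: coeff_v)
  have "coeff v 0 = 0"
    using G by (simp add: coeff_v gap_set_def)
  then have vK: "v ^ K \<in> gap_subring n G"
    unfolding gap_subring_def using veronese_power[OF v] K(1) by (auto intro!: coeff_power_eq_0_below)
  define Q where "Q = [:- emb (v ^ K):] + [:- emb a, 1:] ^ K"
  have "lead_coeff Q = 1"
  proof -
    have "degree [:- emb (v ^ K):] < degree ([:- emb a, 1:] ^ K)"
      using K(3) by (simp add: degree_linear_power)
    then have "lead_coeff Q = lead_coeff ([:- emb a, 1:] ^ K)"
      unfolding Q_def by (rule lead_coeff_add_le)
    then show ?thesis
      by (simp add: lead_coeff_power)
  qed
  moreover have "\<forall>i. coeff Q i \<in> ?R"
  proof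
    fix i
    have "coeff [:- emb (v ^ K):] i \<in> ?R"
      using ring_closed_0[OF R] ring_closed_uminus[OF R] vK by (auto simp: coeff_pCons split: nat.splits)
    moreover have "\<forall>i. coeff [:- emb a, 1:] i \<in> ?R"
      using ring_closed_0[OF R] ring_closed_1[OF R] ring_closed_uminus[OF R] a
      by (auto simp: coeff_pCons split: nat.splits)
    then have "coeff ([:- emb a, 1:] ^ K) i \<in> ?R"
      by (rule coeff_power_in_ring[OF R])
    ultimately show "coeff Q i \<in> ?R"
      unfolding Q_def coeff_add by (rule ring_closed_add[OF R])
  qed
  moreover have "poly Q \<alpha> = 0"
  proof -
    have "\<alpha> - emb a = emb v"
      by (simp add: f a_def emb_diff)
    then show ?thesis
      by (simp add: Q_def emb_power)
  qed
  ultimately show "\<alpha> \<in> int_closure ?R"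
    unfolding int_closure_def using total by (intro CollectI conjI exI[of _ Q]) auto
qed

lemma int_closure_gap_subring:
  assumes G: "gap_set G" "finite G" and n: "0 < n"
  shows "int_closure (emb ` gap_subring n G) = (emb ` veronese n :: 'k::field poly poly fract set)"
proof
  obtain K where "\<forall>j\<in>G. j < K"
    using G(2) finite_nat_set_iff_bounded by blast
  moreover have "Suc K \<le> n * Suc K"
    using n by (cases n) auto
  ultimately have "\<forall>j\<in>G. j < n * Suc K" "n dvd n * Suc K" "0 < n * Suc K"
    using n by auto
  then show "emb ` veronese n \<subseteq> (int_closure (emb ` gap_subring n G) :: 'k poly poly fract set)"
    by (rule veronese_subset_int_closure[OF G(1)])
  show "int_closure (emb ` gap_subring n G) \<subseteq> (emb ` veronese n :: 'k poly poly fract set)"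
    using gap_subring_subset_veronese ring_closed_1[OF ring_closed_gap_subring[OF G(1)]]
    by (intro int_closure_subset_veronese) auto
qed

section \<open>The strict closure\<close>

definition tensor_eq ::
    "'F::field set \<Rightarrow> 'F set \<Rightarrow> ('F \<times> 'F \<Rightarrow> int) \<Rightarrow> ('F \<times> 'F \<Rightarrow> int) \<Rightarrow> bool" where
  "tensor_eq A B u v \<longleftrightarrow> u - v \<in> tensor_rel A B"

lemma tensor_rel_plus: "f \<in> tensor_rel A B \<Longrightarrow> g \<in> tensor_rel A B \<Longrightarrow> f + g \<in> tensor_rel A B"
  using tensor_rel.plus[of f A B g] by (simp add: plus_fun_def)

lemma tensor_rel_uminus: "f \<in> tensor_rel A B \<Longrightarrow> - f \<in> tensor_rel A B"
  using tensor_rel.uminus[of f A B] by (simp add: fun_Compl_def)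

lemma tensor_rel_diff: "f \<in> tensor_rel A B \<Longrightarrow> g \<in> tensor_rel A B \<Longrightarrow> f - g \<in> tensor_rel A B"
  using tensor_rel_plus[of f A B "- g"] tensor_rel_uminus[of g A B] by simp

lemma tensor_eq_refl: "tensor_eq A B u u"
  using tensor_rel.zero by (simp add: tensor_eq_def zero_fun_def)

lemma tensor_eq_sym: "tensor_eq A B u v \<Longrightarrow> tensor_eq A B v u"
  unfolding tensor_eq_def using tensor_rel_uminus[of "u - v" A B] by simp

lemma tensor_eq_trans: "tensor_eq A B u v \<Longrightarrow> tensor_eq A B v w \<Longrightarrow> tensor_eq A B u w"
  unfolding tensor_eq_def using tensor_rel_plus[of "u - v" A B "v - w"] by simp

lemma tensor_eq_add: "tensor_eq A B u v \<Longrightarrow> tensor_eq A B u' v' \<Longrightarrow> tensor_eq A B (u + u') (v + v')"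
  unfolding tensor_eq_def using tensor_rel_plus[of "u - v" A B "u' - v'"] by (simp add: algebra_simps)

lemma tensor_eq_uminus: "tensor_eq A B u v \<Longrightarrow> tensor_eq A B (- u) (- v)"
  unfolding tensor_eq_def using tensor_rel_uminus[of "u - v" A B] by (simp add: algebra_simps)

lemma tensor_eq_add_left:
  "b \<in> B \<Longrightarrow> b' \<in> B \<Longrightarrow> c \<in> B \<Longrightarrow> tensor_eq A B (single (b + b', c)) (single (b, c) + single (b', c))"
  using tensor_rel.addL[of b B b' c A] by (simp add: tensor_eq_def fun_diff_def plus_fun_def diff_diff_eq)

lemma tensor_eq_add_right:
  "b \<in> B \<Longrightarrow> c \<in> B \<Longrightarrow> c' \<in> B \<Longrightarrow> tensor_eq A B (single (b, c + c')) (single (b, c) + single (b, c'))"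
  using tensor_rel.addR[of b B c c' A] by (simp add: tensor_eq_def fun_diff_def plus_fun_def diff_diff_eq)

lemma tensor_eq_balanced:
  "a \<in> A \<Longrightarrow> b \<in> B \<Longrightarrow> c \<in> B \<Longrightarrow> tensor_eq A B (single (a * b, c)) (single (b, a * c))"
  using tensor_rel.bal[of a A b B c] by (simp add: tensor_eq_def fun_diff_def)

lemma single_zero_left_in_tensor_rel:
  assumes "c \<in> B" "(0::'F::field) \<in> B"
  shows "single (0, c) \<in> tensor_rel A B"
proof -
  have "(\<lambda>q. single (0 + 0, c) q - single (0, c) q - single (0, c) q) \<in> tensor_rel A B"
    using assms by (intro tensor_rel.addL)
  then have "- single (0, c) \<in> tensor_rel A B"
    by (simp add: fun_Compl_def)
  then show ?thesis
    using tensor_rel_uminus by fastforce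
qed

lemma single_zero_right_in_tensor_rel:
  assumes "b \<in> B" "(0::'F::field) \<in> B"
  shows "single (b, 0) \<in> tensor_rel A B"
proof -
  have "(\<lambda>q. single (b, 0 + 0) q - single (b, 0) q - single (b, 0) q) \<in> tensor_rel A B"
    using assms by (intro tensor_rel.addR)
  then have "- single (b, 0) \<in> tensor_rel A B"
    by (simp add: fun_Compl_def)
  then show ?thesis
    using tensor_rel_uminus by fastforce
qed

definition tensor_scale :: "'F::field \<Rightarrow> 'F \<Rightarrow> ('F \<times> 'F \<Rightarrow> int) \<Rightarrow> ('F \<times> 'F \<Rightarrow> int)" where
  "tensor_scale r s f = (\<lambda>(p, q). f (p / r, q / s))"

lemma tensor_scale_single:
  fixes r s :: "'F::field"
  assumes "r \<noteq> 0" "s \<noteq> 0"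
  shows "tensor_scale r s (single (b, c)) = single (r * b, s * c)"
proof -
  have "p / r = b \<longleftrightarrow> p = r * b" "q / s = c \<longleftrightarrow> q = s * c" for p q
    using assms by (auto simp: field_simps)
  then show ?thesis
    by (auto simp: tensor_scale_def single_def fun_eq_iff)
qed

lemma tensor_scale_diff: "tensor_scale r s (f - g) = tensor_scale r s f - tensor_scale r s g"
  by (auto simp: tensor_scale_def fun_eq_iff)

lemma tensor_rel_scale:
  fixes r s :: "'F::field"
  assumes f: "f \<in> tensor_rel A B"
    and r: "r \<noteq> 0" "\<forall>b\<in>B. r * b \<in> B" and s: "s \<noteq> 0" "\<forall>c\<in>B. s * c \<in> B"
  shows "tensor_scale r s f \<in> tensor_rel A B"
  using f
proof (induction rule: tensor_rel.induct)
  case (addL b b' c)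
  have "tensor_scale r s (single (b + b', c) - single (b, c) - single (b', c)) =
      single (r * b + r * b', s * c) - single (r * b, s * c) - single (r * b', s * c)"
    using r s by (simp add: tensor_scale_diff tensor_scale_single distrib_left)
  moreover have "\<dots> \<in> tensor_rel A B"
    using tensor_rel.addL[of "r * b" B "r * b'" "s * c" A] addL r s by (simp add: fun_diff_def)
  ultimately show ?case
    by (simp add: fun_diff_def)
next
  case (addR b c c')
  have "tensor_scale r s (single (b, c + c') - single (b, c) - single (b, c')) =
      single (r * b, s * c + s * c') - single (r * b, s * c) - single (r * b, s * c')"
    using r s by (simp add: tensor_scale_diff tensor_scale_single distrib_left)
  moreover have "\<dots> \<in> tensor_rel A B"
    using tensor_rel.addR[of "r * b" B "s * c" "s * c'" A] addR r s by (simp add: fun_diff_def)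
  ultimately show ?case
    by (simp add: fun_diff_def)
next
  case (bal a b c)
  have "tensor_scale r s (single (a * b, c) - single (b, a * c)) =
      single (a * (r * b), s * c) - single (r * b, a * (s * c))"
    using r s by (simp add: tensor_scale_diff tensor_scale_single ac_simps)
  moreover have "\<dots> \<in> tensor_rel A B"
    using tensor_rel.bal[of a A "r * b" B "s * c"] bal r s by (simp add: fun_diff_def)
  ultimately show ?case
    by (simp add: fun_diff_def)
next
  case zero
  then show ?case by (simp add: tensor_scale_def tensor_rel.zero)
next
  case (plus f g)
  have "tensor_scale r s (\<lambda>q. f q + g q) = (\<lambda>q. tensor_scale r s f q + tensor_scale r s g q)"
    by (auto simp: tensor_scale_def)
  then show ?case using plus tensor_rel.plus by metis
next
  case (uminus f)
  have "tensor_scale r s (\<lambda>q. - f q) = (\<lambda>q. - tensor_scale r s f q)"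
    by (auto simp: tensor_scale_def)
  then show ?case using uminus tensor_rel.uminus by metis
qed

lemma tensor_eq_scale:
  assumes B: "ring_closed B" and rs: "r \<in> B" "s \<in> B"
    and bc: "b \<in> B" "c \<in> B" "b' \<in> B" "c' \<in> B"
    and eq: "tensor_eq A B (single (b, c)) (single (b', c'))"
  shows "tensor_eq A B (single (r * b, s * c)) (single (r * b', s * c'))"
proof (cases "r = 0 \<or> s = 0")
  case True
  then show ?thesis
    using single_zero_left_in_tensor_rel[of _ B A] single_zero_right_in_tensor_rel[of _ B A]
      ring_closed_0[OF B] ring_closed_mult[OF B] rs bc
    by (auto simp: tensor_eq_def intro: tensor_rel_diff)
next
  case False
  have "tensor_scale r s (single (b, c) - single (b', c')) \<in> tensor_rel A B"
    using eq False B rs by (intro tensor_rel_scale) (auto simp: tensor_eq_def intro: ring_closed_mult)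
  then show ?thesis
    using False by (simp add: tensor_eq_def tensor_scale_diff tensor_scale_single)
qed

lemma strict_closure_iff:
  "\<alpha> \<in> strict_closure A B \<longleftrightarrow> \<alpha> \<in> B \<and> tensor_eq A B (single (\<alpha>, 1)) (single (1, \<alpha>))"
  by (simp add: strict_closure_def tensor_eq_def fun_diff_def)

lemma tensor_eq_uminus_left:
  assumes B: "ring_closed B" and "b \<in> B" "c \<in> B"
  shows "tensor_eq A B (single (- b, c)) (- single (b, c))"
proof -
  have sum: "single (0, c) - (single (b, c) + single (- b, c)) \<in> tensor_rel A B"
    using tensor_eq_add_left[of b B "- b" c A] assms ring_closed_uminus[OF B]
    by (simp add: tensor_eq_def)
  have zero: "single (0, c) \<in> tensor_rel A B"
    using assms ring_closed_0[OF B] by (intro single_zero_left_in_tensor_rel)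
  have "single (0, c) - (single (0, c) - (single (b, c) + single (- b, c))) \<in> tensor_rel A B"
    by (rule tensor_rel_diff[OF zero sum])
  moreover have "single (0, c) - (single (0, c) - (single (b, c) + single (- b, c))) = single (- b, c) - - single (b, c)"
    by (simp add: algebra_simps)
  ultimately show ?thesis
    by (simp add: tensor_eq_def)
qed

lemma tensor_eq_uminus_right:
  assumes B: "ring_closed B" and "b \<in> B" "c \<in> B"
  shows "tensor_eq A B (single (b, - c)) (- single (b, c))"
proof -
  have sum: "single (b, 0) - (single (b, c) + single (b, - c)) \<in> tensor_rel A B"
    using tensor_eq_add_right[of b B c "- c" A] assms ring_closed_uminus[OF B]
    by (simp add: tensor_eq_def)
  have zero: "single (b, 0) \<in> tensor_rel A B"
    using assms ring_closed_0[OF B] by (intro single_zero_right_in_tensor_rel)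
  have "single (b, 0) - (single (b, 0) - (single (b, c) + single (b, - c))) \<in> tensor_rel A B"
    by (rule tensor_rel_diff[OF zero sum])
  moreover have "single (b, 0) - (single (b, 0) - (single (b, c) + single (b, - c))) = single (b, - c) - - single (b, c)"
    by (simp add: algebra_simps)
  ultimately show ?thesis
    by (simp add: tensor_eq_def)
qed

lemma ring_closed_strict_closure:
  assumes B: "ring_closed (B :: 'F::field set)"
  shows "ring_closed (strict_closure A B)"
  unfolding ring_closed_def
proof (intro conjI ballI)
  have one: "1 \<in> B" using B by (rule ring_closed_1)
  show "1 \<in> strict_closure A B"
    using one by (simp add: strict_closure_iff tensor_eq_refl)
  fix \<alpha> assume \<alpha>: "\<alpha> \<in> strict_closure A B"
  then have \<alpha>B: "\<alpha> \<in> B" and \<alpha>eq: "tensor_eq A B (single (\<alpha>, 1)) (single (1, \<alpha>))"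
    by (simp_all add: strict_closure_iff)
  have "tensor_eq A B (single (- \<alpha>, 1)) (single (1, - \<alpha>))"
    using tensor_eq_uminus_left[OF B \<alpha>B one] tensor_eq_uminus[OF \<alpha>eq]
      tensor_eq_sym[OF tensor_eq_uminus_right[OF B one \<alpha>B]]
    by (blast intro: tensor_eq_trans)
  then show "- \<alpha> \<in> strict_closure A B"
    using ring_closed_uminus[OF B \<alpha>B] by (simp add: strict_closure_iff)
  fix \<beta> assume \<beta>: "\<beta> \<in> strict_closure A B"
  then have \<beta>B: "\<beta> \<in> B" and \<beta>eq: "tensor_eq A B (single (\<beta>, 1)) (single (1, \<beta>))"
    by (simp_all add: strict_closure_iff)
  have "tensor_eq A B (single (\<alpha> + \<beta>, 1)) (single (1, \<alpha> + \<beta>))"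
    using tensor_eq_add_left[OF \<alpha>B \<beta>B one, of A] tensor_eq_add[OF \<alpha>eq \<beta>eq]
      tensor_eq_sym[OF tensor_eq_add_right[OF one \<alpha>B \<beta>B, of A]]
    by (blast intro: tensor_eq_trans)
  then show "\<alpha> + \<beta> \<in> strict_closure A B"
    using ring_closed_add[OF B \<alpha>B \<beta>B] by (simp add: strict_closure_iff)
  have "tensor_eq A B (single (\<alpha> * \<beta>, 1 * 1)) (single (\<alpha> * 1, 1 * \<beta>))"
    using tensor_eq_scale[OF B \<alpha>B one \<beta>B one one \<beta>B \<beta>eq] .
  moreover have "tensor_eq A B (single (1 * \<alpha>, \<beta> * 1)) (single (1 * 1, \<beta> * \<alpha>))"
    using tensor_eq_scale[OF B one \<beta>B \<alpha>B one one \<alpha>B \<alpha>eq] .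
  ultimately have "tensor_eq A B (single (\<alpha> * \<beta>, 1)) (single (1, \<alpha> * \<beta>))"
    by (auto simp: mult.commute intro: tensor_eq_trans)
  then show "\<alpha> * \<beta> \<in> strict_closure A B"
    using ring_closed_mult[OF B \<alpha>B \<beta>B] by (simp add: strict_closure_iff)
qed

lemma subset_strict_closure:
  assumes "A \<subseteq> B" "ring_closed (B :: 'F::field set)"
  shows "A \<subseteq> strict_closure A B"
proof
  fix a assume a: "a \<in> A"
  have "tensor_eq A B (single (a * 1, 1)) (single (1, a * 1))"
    using tensor_eq_balanced[OF a] ring_closed_1[OF assms(2)] by blast
  then show "a \<in> strict_closure A B"
    using a assms(1) by (auto simp: strict_closure_iff)
qed

lemma strict_closure_weakly_arf:
  assumes B: "ring_closed (B :: 'F::field set)"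
    and S: "x \<in> strict_closure A B" "y \<in> strict_closure A B" "z \<in> strict_closure A B"
    and x0: "x \<noteq> 0" and yx: "y / x \<in> B" and zx: "z / x \<in> B"
  shows "y * z / x \<in> strict_closure A B"
proof -
  define \<alpha> where "\<alpha> = y / x"
  define \<beta> where "\<beta> = z / x"
  have xyz: "x \<in> B" "y \<in> B" "z \<in> B" "tensor_eq A B (single (x, 1)) (single (1, x))"
    "tensor_eq A B (single (y, 1)) (single (1, y))" "tensor_eq A B (single (z, 1)) (single (1, z))"
    using S by (auto simp: strict_closure_iff)
  have one: "1 \<in> B" using B by (rule ring_closed_1)
  have \<alpha>\<beta>: "\<alpha> \<in> B" "\<beta> \<in> B" using yx zx by (simp_all add: \<alpha>_def \<beta>_def)
  have yz: "y * z / x = \<alpha> * z" "y * z / x = y * \<beta>" "z = x * \<beta>" "y = \<alpha> * x"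
    using x0 by (simp_all add: \<alpha>_def \<beta>_def field_simps)
  have "tensor_eq A B (single (\<alpha> * z, 1 * 1)) (single (\<alpha> * 1, 1 * z))"
    using tensor_eq_scale[OF B \<alpha>\<beta>(1) one xyz(3) one one xyz(3) xyz(6)] .
  moreover have "tensor_eq A B (single (\<alpha> * 1, \<beta> * x)) (single (\<alpha> * x, \<beta> * 1))"
    using tensor_eq_scale[OF B \<alpha>\<beta> one xyz(1) xyz(1) one tensor_eq_sym[OF xyz(4)]] .
  moreover have "tensor_eq A B (single (1 * y, \<beta> * 1)) (single (1 * 1, \<beta> * y))"
    using tensor_eq_scale[OF B one \<alpha>\<beta>(2) xyz(2) one one xyz(2) xyz(5)] .
  ultimately have "tensor_eq A B (single (\<alpha> * z, 1)) (single (1, y * \<beta>))"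
    using yz by (auto simp: ac_simps intro: tensor_eq_trans)
  moreover have "\<alpha> * z \<in> B"
    using B \<alpha>\<beta> xyz by (intro ring_closed_mult)
  ultimately show ?thesis
    using yz by (simp add: strict_closure_iff mult.assoc)
qed

lemma arf_step_subset_strict_closure:
  assumes B: "ring_closed (B :: 'F::field set)" and A: "A \<subseteq> strict_closure R B"
    and one: "1 \<in> A" and int_closure: "int_closure A \<subseteq> B"
  shows "arf_step A \<subseteq> strict_closure R B"
  unfolding arf_step_def
proof (rule ring_gen_least[OF ring_closed_strict_closure[OF B]], safe)
  fix x assume "x \<in> A"
  then show "x \<in> strict_closure R B" using A by blast
next
  fix x y z assume h: "x \<in> nzd A" "y \<in> A" "z \<in> A" "y / x \<in> int_closure A" "z / x \<in> int_closure A"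
  have "x \<in> A" using h(1) by (simp add: nzd_def)
  then show "y * z / x \<in> strict_closure R B"
    using strict_closure_weakly_arf[OF B, of x R y z] A h int_closure nzd_ne_0[OF h(1) one] by blast
qed

lemma subset_arf_step: "A \<subseteq> arf_step A"
  unfolding arf_step_def by (auto intro: ring_gen.base)

lemma arf_closure_subset_strict_closure:
  assumes B: "ring_closed (B :: 'F::field set)" and R: "R \<subseteq> B" "1 \<in> R"
    and int_closure: "\<And>A. R \<subseteq> A \<Longrightarrow> A \<subseteq> B \<Longrightarrow> int_closure A \<subseteq> B"
  shows "arf_closure R \<subseteq> strict_closure R B"
proof -
  have "R \<subseteq> (arf_step ^^ k) R \<and> (arf_step ^^ k) R \<subseteq> strict_closure R B" for k
  proof (induction k)
    case 0
    then show ?case using subset_strict_closure[OF R(1) B] by simp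
  next
    case (Suc k)
    let ?A = "(arf_step ^^ k) R"
    have "?A \<subseteq> B"
      using Suc by (auto simp: strict_closure_def)
    then have "arf_step ?A \<subseteq> strict_closure R B"
      using Suc R by (intro arf_step_subset_strict_closure[OF B] int_closure) auto
    then show ?case
      using Suc subset_arf_step[of ?A] by auto
  qed
  then show ?thesis
    unfolding arf_closure_def by blast
qed

lemma sum_single:
  assumes "finite F"
  shows "(\<Sum>q\<in>F. of_int (single p q) * \<Phi> q) = (if p \<in> F then \<Phi> p else (0::'G::comm_ring_1))"
proof -
  have "of_int (single p q) * \<Phi> q = (if q = p then \<Phi> p else 0)" for q
    by (simp add: single_def)
  then show ?thesis
    using assms by (simp add: sum.delta)
qed

text \<open>The linear extension of a biadditive \<open>A\<close>-balanced form on \<open>B \<times> B\<close> kills \<open>tensor_rel A B\<close>,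
  i.e. it factors through \<open>B \<otimes>\<^sub>A B\<close>.\<close>

lemma balanced_form_vanishes:
  fixes \<Phi> :: "'F::field \<times> 'F \<Rightarrow> 'G::comm_ring_1"
  assumes addL: "\<And>b b' c. b \<in> B \<Longrightarrow> b' \<in> B \<Longrightarrow> c \<in> B \<Longrightarrow> \<Phi> (b + b', c) = \<Phi> (b, c) + \<Phi> (b', c)"
    and addR: "\<And>b c c'. b \<in> B \<Longrightarrow> c \<in> B \<Longrightarrow> c' \<in> B \<Longrightarrow> \<Phi> (b, c + c') = \<Phi> (b, c) + \<Phi> (b, c')"
    and bal: "\<And>a b c. a \<in> A \<Longrightarrow> b \<in> B \<Longrightarrow> c \<in> B \<Longrightarrow> \<Phi> (a * b, c) = \<Phi> (b, a * c)"
    and f: "f \<in> tensor_rel A B"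
  shows "\<exists>F. finite F \<and> (\<forall>F'. finite F' \<longrightarrow> F \<subseteq> F' \<longrightarrow> (\<Sum>q\<in>F'. of_int (f q) * \<Phi> q) = 0)"
  using f
proof (induction rule: tensor_rel.induct)
  case (addL b b' c)
  show ?case
  proof (intro exI[of _ "{(b + b', c), (b, c), (b', c)}"] conjI allI impI)
    fix F' :: "('F \<times> 'F) set" assume "finite F'" "{(b + b', c), (b, c), (b', c)} \<subseteq> F'"
    then show "(\<Sum>q\<in>F'. of_int (single (b + b', c) q - single (b, c) q - single (b', c) q) * \<Phi> q) = 0"
      using assms(1)[OF addL] by (simp add: of_int_diff left_diff_distrib sum_subtractf sum_single)
  qed simp
next
  case (addR b c c')
  show ?case
  proof (intro exI[of _ "{(b, c + c'), (b, c), (b, c')}"] conjI allI impI)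
    fix F' :: "('F \<times> 'F) set" assume "finite F'" "{(b, c + c'), (b, c), (b, c')} \<subseteq> F'"
    then show "(\<Sum>q\<in>F'. of_int (single (b, c + c') q - single (b, c) q - single (b, c') q) * \<Phi> q) = 0"
      using assms(2)[OF addR] by (simp add: of_int_diff left_diff_distrib sum_subtractf sum_single)
  qed simp
next
  case (bal a b c)
  show ?case
  proof (intro exI[of _ "{(a * b, c), (b, a * c)}"] conjI allI impI)
    fix F' :: "('F \<times> 'F) set" assume "finite F'" "{(a * b, c), (b, a * c)} \<subseteq> F'"
    then show "(\<Sum>q\<in>F'. of_int (single (a * b, c) q - single (b, a * c) q) * \<Phi> q) = 0"
      using assms(3)[OF bal] by (simp add: of_int_diff left_diff_distrib sum_subtractf sum_single)
  qed simp
next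
  case zero
  then show ?case by (intro exI[of _ "{}"]) simp
next
  case (plus f g)
  then obtain F G where
    F: "finite F" "\<forall>F'. finite F' \<longrightarrow> F \<subseteq> F' \<longrightarrow> (\<Sum>q\<in>F'. of_int (f q) * \<Phi> q) = 0" and
    G: "finite G" "\<forall>F'. finite F' \<longrightarrow> G \<subseteq> F' \<longrightarrow> (\<Sum>q\<in>F'. of_int (g q) * \<Phi> q) = 0"
    by blast
  show ?case
  proof (intro exI[of _ "F \<union> G"] conjI allI impI)
    fix F' :: "('F \<times> 'F) set" assume "finite F'" "F \<union> G \<subseteq> F'"
    then show "(\<Sum>q\<in>F'. of_int (f q + g q) * \<Phi> q) = 0"
      using F G by (simp add: distrib_right sum.distrib)
  qed (use F G in simp)
next
  case (uminus f)
  then obtain F where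
    F: "finite F" "\<forall>F'. finite F' \<longrightarrow> F \<subseteq> F' \<longrightarrow> (\<Sum>q\<in>F'. of_int (f q) * \<Phi> q) = 0"
    by blast
  show ?case
  proof (intro exI[of _ F] conjI allI impI)
    fix F' :: "('F \<times> 'F) set" assume "finite F'" "F \<subseteq> F'"
    then show "(\<Sum>q\<in>F'. of_int (- f q) * \<Phi> q) = 0"
      using F by (simp add: sum_negf)
  qed (use F in simp)
qed

lemma strict_closure_balanced_form:
  fixes \<Phi> :: "'F::field \<times> 'F \<Rightarrow> 'G::comm_ring_1"
  assumes addL: "\<And>b b' c. b \<in> B \<Longrightarrow> b' \<in> B \<Longrightarrow> c \<in> B \<Longrightarrow> \<Phi> (b + b', c) = \<Phi> (b, c) + \<Phi> (b', c)"
    and addR: "\<And>b c c'. b \<in> B \<Longrightarrow> c \<in> B \<Longrightarrow> c' \<in> B \<Longrightarrow> \<Phi> (b, c + c') = \<Phi> (b, c) + \<Phi> (b, c')"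
    and bal: "\<And>a b c. a \<in> A \<Longrightarrow> b \<in> B \<Longrightarrow> c \<in> B \<Longrightarrow> \<Phi> (a * b, c) = \<Phi> (b, a * c)"
    and \<alpha>: "\<alpha> \<in> strict_closure A B"
  shows "\<Phi> (\<alpha>, 1) = \<Phi> (1, \<alpha>)"
proof -
  have "(\<lambda>q. single (\<alpha>, 1) q - single (1, \<alpha>) q) \<in> tensor_rel A B"
    using \<alpha> by (simp add: strict_closure_def)
  from balanced_form_vanishes[OF addL addR bal this] obtain F where F: "finite F"
    "\<forall>F'. finite F' \<longrightarrow> F \<subseteq> F' \<longrightarrow> (\<Sum>q\<in>F'. of_int (single (\<alpha>, 1) q - single (1, \<alpha>) q) * \<Phi> q) = 0"
    by blast
  then have "(\<Sum>q\<in>F \<union> {(\<alpha>, 1), (1, \<alpha>)}. of_int (single (\<alpha>, 1) q - single (1, \<alpha>) q) * \<Phi> q) = 0"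
    using F(2)[rule_format, of "F \<union> {(\<alpha>, 1), (1, \<alpha>)}"] by blast
  then show ?thesis
    using F(1) by (cases "\<alpha> = 1") (simp_all add: of_int_diff left_diff_distrib sum_subtractf sum_single)
qed

lemma strict_closure_poly2_form:
  fixes \<phi> :: "'k::field poly poly \<Rightarrow> 'k poly poly \<Rightarrow> 'G::comm_ring_1"
  assumes \<alpha>: "\<alpha> \<in> strict_closure (emb ` S) (emb ` T)"
    and addL: "\<And>b b' c. \<phi> (b + b') c = \<phi> b c + \<phi> b' c"
    and addR: "\<And>b c c'. \<phi> b (c + c') = \<phi> b c + \<phi> b c'"
    and bal: "\<And>a b c. a \<in> S \<Longrightarrow> \<phi> (a * b) c = \<phi> b (a * c)"
  shows "\<phi> (unemb \<alpha>) 1 = \<phi> 1 (unemb \<alpha>)"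
proof -
  define \<Phi> where "\<Phi> = (\<lambda>(u, v). \<phi> (unemb u) (unemb v))"
  have "\<Phi> (\<alpha>, 1) = \<Phi> (1, \<alpha>)"
    by (rule strict_closure_balanced_form[OF _ _ _ \<alpha>])
      (auto simp: \<Phi>_def addL addR bal emb_add[symmetric] emb_mult[symmetric])
  then show ?thesis
    by (simp add: \<Phi>_def)
qed

lemma strict_closure_coeff_eq_0:
  fixes \<alpha> :: "'k::field poly poly fract"
  assumes \<alpha>: "\<alpha> \<in> strict_closure (emb ` gap_subring n G) (emb ` T)"
    and e: "0 < e" "{1..e} \<subseteq> G"
  shows "coeff (unemb \<alpha>) e = 0"
proof -
  have "coeff (a * b) e = coeff a 0 * coeff b e" if "a \<in> gap_subring n G" for a b :: "'k poly poly"
  proof -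
    obtain e' where e': "e = Suc e'"
      using e by (cases e) auto
    have "Suc i \<in> G" if "i \<le> e'" for i
      using e(2) e' that by auto
    then have "(\<Sum>i\<le>e'. coeff a (Suc i) * coeff b (e - Suc i)) = 0"
      using that by (intro sum.neutral) (auto simp: gap_subring_def)
    then show ?thesis
      unfolding coeff_mult e' sum.atMost_Suc_shift by simp
  qed
  then have "coeff (unemb \<alpha>) e * coeff 1 0 = coeff 1 e * coeff (unemb \<alpha>) 0"
    by (intro strict_closure_poly2_form[OF \<alpha>, where \<phi> = "\<lambda>p q. coeff p e * coeff q 0"])
      (simp_all add: distrib_right distrib_left coeff_mult_0 ac_simps)
  then show ?thesis
    using e by simp
qed

lemma strict_closure_coeff2_eq_0:
  fixes \<alpha> :: "'k::field poly poly fract" and i j a b c d :: nat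
  defines "\<phi> \<equiv> \<lambda>p q. coeff2 p i j * coeff2 q 0 0 + coeff2 p (i - a) (j - b) * coeff2 q a b
      + coeff2 p (i - c) (j - d) * coeff2 q c d"
  assumes \<alpha>: "\<alpha> \<in> strict_closure (emb ` S) (emb ` T)"
    and bal: "\<And>r p q. r \<in> S \<Longrightarrow> \<phi> (r * p) q = \<phi> p (r * q)"
    and bd: "0 < b" "b < j" "0 < d" "d < j"
  shows "coeff2 (unemb \<alpha>) i j = 0"
proof -
  have "\<phi> (unemb \<alpha>) 1 = \<phi> 1 (unemb \<alpha>)"
    by (rule strict_closure_poly2_form[OF \<alpha> _ _ bal]) (simp_all add: \<phi>_def algebra_simps)
  then show ?thesis
    using bd by (simp add: \<phi>_def coeff2_1)
qed

lemma monom_coeff_factor: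
  assumes p: "p \<in> veronese n" and e: "n dvd e + j" and low: "\<forall>i<e. coeff2 p i j = 0"
    and G: "gap_set G"
  shows "\<exists>g\<in>gap_subring n G. monom (coeff p j) j = g * monom2 e j"
proof
  define g where "g = [:poly_shift e (coeff p j):]"
  have coeff2_g: "coeff2 g x y = (if y = 0 then coeff2 p (x + e) j else 0)" for x y
    by (simp add: g_def coeff2_def coeff_poly_shift coeff_pCons split: nat.splits)
  have "g \<in> veronese n"
  proof (rule veroneseI)
    fix x y assume "coeff2 g x y \<noteq> 0"
    then have "y = 0" "coeff2 p (x + e) j \<noteq> 0"
      by (auto simp: coeff2_g split: if_splits)
    then have "n dvd x + e + j"
      using p veroneseD by blast
    then show "n dvd x + y"
      using e \<open>y = 0\<close> by (metis add.assoc dvd_add_left_iff add_0_right)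
  qed
  moreover have "\<forall>j\<in>G. coeff g j = 0"
    using G by (auto simp: g_def gap_set_def coeff_pCons split: nat.splits)
  ultimately show "g \<in> gap_subring n G"
    by (simp add: gap_subring_def)
  show "monom (coeff p j) j = g * monom2 e j"
  proof (rule poly2_eqI)
    fix a b
    have "coeff2 (g * monom2 e j) a b = (if e \<le> a \<and> j \<le> b then coeff2 g (a - e) (b - j) else 0)"
      by (simp only: mult.commute[of g] coeff2_monom2_mult)
    moreover have "coeff2 (monom (coeff p j) j) a b = (if b = j then coeff2 p a j else 0)"
      by (simp add: coeff2_def coeff_monom)
    ultimately show "coeff2 (monom (coeff p j) j) a b = coeff2 (g * monom2 e j) a b"
      using low by (auto simp: coeff2_g not_le)
  qed
qed

lemma remove_monoms_in_gap_subring: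
  assumes "p \<in> veronese n" "\<forall>j\<in>G - J. coeff p j = 0" "finite J"
  shows "p - (\<Sum>j\<in>J. monom (coeff p j) j) \<in> gap_subring n G"
proof -
  have coeff_sum: "coeff (\<Sum>j\<in>J. monom (coeff p j) j) k = (if k \<in> J then coeff p k else 0)" for k
    using assms(3) by (simp add: coeff_sum coeff_monom sum.delta)
  have "p - (\<Sum>j\<in>J. monom (coeff p j) j) \<in> veronese n"
  proof (rule veroneseI)
    fix i k assume "coeff2 (p - (\<Sum>j\<in>J. monom (coeff p j) j)) i k \<noteq> 0"
    then have "coeff2 p i k \<noteq> 0"
      by (auto simp: coeff2_def coeff_sum split: if_splits)
    then show "n dvd i + k"
      using assms(1) veroneseD by blast
  qed
  then show ?thesis
    using assms(2) by (auto simp: gap_subring_def coeff_sum)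
qed

lemma ring_closed_arf_step: "ring_closed (arf_step A)"
  unfolding arf_step_def by (rule ring_closed_ring_gen)

lemma arf_step_subset_arf_closure: "arf_step A \<subseteq> arf_closure A"
  using UN_upper[of 1 UNIV "\<lambda>n. (arf_step ^^ n) A"] by (simp add: arf_closure_def)

lemma arf_stepI:
  assumes "x \<in> nzd A" "y \<in> A" "z \<in> A" "y / x \<in> int_closure A" "z / x \<in> int_closure A"
  shows "y * z / x \<in> arf_step A"
  unfolding arf_step_def by (rule ring_gen.base) (use assms in blast)

lemma monom2_in_arf_step:
  fixes a b c d :: nat
  assumes G: "gap_set G" "finite G" and n: "0 < n"
    and x: "monom2 a b \<in> (gap_subring n G :: 'k::field poly poly set)"
    and y: "monom2 c d \<in> (gap_subring n G :: 'k poly poly set)"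
    and ac: "a \<le> c" "b \<le> d"
  shows "(emb (monom2 (2 * c - a) (2 * d - b)) :: 'k poly poly fract)
    \<in> arf_step (emb ` gap_subring n G)"
proof -
  let ?R = "emb ` gap_subring n G :: 'k poly poly fract set"
  have "n dvd a + b" "n dvd c + d"
    using x y veroneseD[of "monom2 a b" n a b] veroneseD[of "monom2 c d" n c d]
    by (auto simp: gap_subring_def coeff2_monom2)
  moreover have "(c - a) + (d - b) = (c + d) - (a + b)"
    using ac by simp
  ultimately have "n dvd (c - a) + (d - b)"
    by (simp add: dvd_diff_nat)
  then have "(emb (monom2 (c - a) (d - b)) :: 'k poly poly fract) \<in> int_closure ?R"
    unfolding int_closure_gap_subring[OF G n] by (intro imageI monom2_in_veronese)
  moreover have quotient: "emb (monom2 c d) / emb (monom2 a b) = (emb (monom2 (c - a) (d - b)) :: 'k poly poly fract)"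
    using ac by (intro emb_divide) (simp_all add: emb_mult[symmetric] monom2_mult)
  moreover have "emb (monom2 c d) * emb (monom2 c d) / emb (monom2 a b) =
      (emb (monom2 (2 * c - a) (2 * d - b)) :: 'k poly poly fract)"
    unfolding emb_mult[symmetric] using ac
    by (intro emb_divide) (simp_all add: emb_mult[symmetric] monom2_mult mult_2)
  moreover have "emb (monom2 a b) \<in> nzd ?R"
    using x by (intro nzdI) (auto simp: emb_eq_0_iff)
  ultimately show ?thesis
    using arf_stepI[of "emb (monom2 a b)" ?R "emb (monom2 c d)" "emb (monom2 c d)"] y by auto
qed

lemma arf_closure_eq_strict_closure:
  fixes E :: "'k::field poly poly fract set"
  assumes G: "gap_set G" "finite G" and n: "0 < n" and R: "R = emb ` gap_subring n G"
    and lower: "E \<subseteq> arf_step R" and upper: "strict_closure R (emb ` veronese n) \<subseteq> E"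
  shows "arf_closure R = E" "strict_closure R (int_closure R) = E"
proof -
  have int_closure: "int_closure R = emb ` veronese n"
    unfolding R by (rule int_closure_gap_subring[OF G n])
  have "R \<subseteq> emb ` veronese n" "1 \<in> R"
    unfolding R using gap_subring_subset_veronese ring_closed_1[OF ring_closed_gap_subring[OF G(1)]]
    by auto
  then have "arf_closure R \<subseteq> strict_closure R (emb ` veronese n)"
    by (intro arf_closure_subset_strict_closure ring_closed_veronese int_closure_subset_veronese)
      auto
  then show "arf_closure R = E" "strict_closure R (int_closure R) = E"
    using lower upper arf_step_subset_arf_closure[of R] unfolding int_closure by blast+
qed

section \<open>The two examples\<close>

lemma strict_closure_R1_coeff2_3_5:
  assumes "\<alpha> \<in> strict_closure (emb ` gap_subring 4 {1, 2, 5}) (emb ` T)"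
  shows "coeff2 (unemb \<alpha>) 3 5 = 0"
  by (rule strict_closure_coeff2_eq_0[OF assms, where a = 0 and b = 4 and c = 1 and d = 3])
    (simp_all add: coeff2_mult atMost_nat_numeral coeff2_gap_subring dvd_eq_mod_eq_0 algebra_simps)

lemma strict_closure_R2_coeff2_4_6:
  assumes "\<alpha> \<in> strict_closure (emb ` gap_subring 5 {1, 2, 3, 6, 7, 11}) (emb ` T)"
  shows "coeff2 (unemb \<alpha>) 4 6 = 0"
  by (rule strict_closure_coeff2_eq_0[OF assms, where a = 0 and b = 5 and c = 1 and d = 4])
    (simp_all add: coeff2_mult atMost_nat_numeral coeff2_gap_subring dvd_eq_mod_eq_0 algebra_simps)

lemma strict_closure_R2_coeff2_3_7:
  assumes "\<alpha> \<in> strict_closure (emb ` gap_subring 5 {1, 2, 3, 6, 7, 11}) (emb ` T)"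
  shows "coeff2 (unemb \<alpha>) 3 7 = 0"
  by (rule strict_closure_coeff2_eq_0[OF assms, where a = 0 and b = 5 and c = 1 and d = 4])
    (simp_all add: coeff2_mult atMost_nat_numeral coeff2_gap_subring dvd_eq_mod_eq_0 algebra_simps)

lemma strict_closure_R1_subset:
  fixes R :: "'k::field poly poly fract set"
  defines "R \<equiv> emb ` gap_subring 4 {1, 2, 5}"
  shows "strict_closure R (emb ` veronese 4) \<subseteq> {a + b * emb (monom2 7 5) | a b. a \<in> R \<and> b \<in> R}"
proof
  fix \<alpha> assume \<alpha>: "\<alpha> \<in> strict_closure R (emb ` veronese 4)"
  then obtain p where p: "\<alpha> = emb p" "p \<in> veronese 4"
    by (auto simp: strict_closure_def)
  have "{1..2} \<subseteq> {1, 2, 5 :: nat}"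
    by auto
  then have "coeff p 1 = 0" "coeff p 2 = 0" "coeff2 p 3 5 = 0"
    using strict_closure_coeff_eq_0[of \<alpha>, where e = 1] strict_closure_coeff_eq_0[of \<alpha>, where e = 2]
      strict_closure_R1_coeff2_3_5[of \<alpha>] \<alpha> p(1) by (auto simp: R_def)
  moreover have "i = 3 \<or> \<not> (4::nat) dvd i + 5" if "i < 7" for i
    using that by presburger
  ultimately have "\<forall>i<7. coeff2 p i 5 = 0"
    using veroneseD[OF p(2)] by blast
  then obtain g where g: "g \<in> gap_subring 4 {1, 2, 5}" "monom (coeff p 5) 5 = g * monom2 7 5"
    using monom_coeff_factor[OF p(2) _ _ gap_set_gaps[of 4, unfolded gaps_4], of 7 5] by auto
  have "p - (\<Sum>j\<in>{5}. monom (coeff p j) j) \<in> gap_subring 4 {1, 2, 5}"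
    using \<open>coeff p 1 = 0\<close> \<open>coeff p 2 = 0\<close> by (intro remove_monoms_in_gap_subring[OF p(2)]) auto
  moreover have "\<alpha> = emb (p - (\<Sum>j\<in>{5}. monom (coeff p j) j)) + emb g * emb (monom2 7 5)"
    by (simp add: p(1) g(2) emb_diff emb_mult)
  ultimately show "\<alpha> \<in> {a + b * emb (monom2 7 5) | a b. a \<in> R \<and> b \<in> R}"
    using g(1) unfolding R_def by blast
qed

lemma R1_closures:
  fixes R :: "'k::field poly poly fract set"
  defines "R \<equiv> emb ` gap_subring 4 {1, 2, 5}"
    and "E \<equiv> {a + b * (varX ^ 7 * varY ^ 5) | a b. a \<in> R \<and> b \<in> R}"
  shows "R \<subset> E \<and> arf_closure R = E \<and> strict_closure R (int_closure R) = E"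
proof -
  have G: "gap_set {1, 2, 5 :: nat}" "finite {1, 2, 5 :: nat}"
    using gap_set_gaps[of 4] by (simp_all add: gaps_4)
  have R: "ring_closed R"
    unfolding R_def by (rule ring_closed_gap_subring[OF G(1)])
  have w: "varX ^ 7 * varY ^ 5 = (emb (monom2 7 5) :: 'k poly poly fract)"
    by (rule varX_varY_power)
  have "emb (monom2 (2 * 4 - 1) (2 * 4 - 3)) \<in> arf_step R"
    unfolding R_def by (rule monom2_in_arf_step[OF G]) (auto intro: monom2_in_gap_subring)
  then have "E \<subseteq> arf_step R"
    using subset_arf_step[of R] unfolding E_def w
    by (auto intro!: ring_closed_add ring_closed_mult ring_closed_arf_step)
  moreover have "R \<subseteq> E" "emb (monom2 7 5) \<in> E" "emb (monom2 7 5) \<notin> R"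
    using ring_closed_0[OF R] ring_closed_1[OF R] unfolding E_def w
    by (force, force, auto simp: R_def emb_inject gap_subring_def monom2_def)
  moreover have "strict_closure R (emb ` veronese 4) \<subseteq> E"
    using strict_closure_R1_subset[where 'k = 'k] unfolding E_def w R_def .
  ultimately show ?thesis
    using arf_closure_eq_strict_closure[OF G zero_less_numeral R_def[THEN meta_eq_to_obj_eq]]
    by blast
qed

text \<open>\<open>X\<^sup>8Y\<^sup>7\<close> is not a monomial step: it comes from \<open>x = Y\<^sup>5 + XY\<^sup>4\<close>, \<open>y = X\<^sup>5Y\<^sup>5 + X\<^sup>2Y\<^sup>8\<close>
  with \<open>y / x = X\<^sup>2Y\<^sup>3 - X\<^sup>3Y\<^sup>2 + X\<^sup>4Y\<close>, whose \<open>y\<^sup>2/x\<close> contains \<open>-X\<^sup>8Y\<^sup>7\<close> next to monomials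
  already in the first Arf step.\<close>

lemma R2_monom2_8_7_in_arf_step:
  "(emb (monom2 8 7) :: 'k::field poly poly fract) \<in> arf_step (emb ` gap_subring 5 {1, 2, 3, 6, 7, 11})"
proof -
  let ?R = "emb ` gap_subring 5 {1, 2, 3, 6, 7, 11} :: 'k poly poly fract set"
  have G: "gap_set {1, 2, 3, 6, 7, 11 :: nat}" "finite {1, 2, 3, 6, 7, 11 :: nat}"
    using gap_set_gaps[of 5] by (simp_all add: gaps_5)
  have R: "ring_closed ?R"
    by (rule ring_closed_gap_subring[OF G(1)])
  have A: "ring_closed (arf_step ?R)" "?R \<subseteq> arf_step ?R"
    by (simp_all add: ring_closed_arf_step subset_arf_step)
  have monom: "emb (monom2 i j) \<in> ?R" if "5 dvd i + j" "j \<notin> {1, 2, 3, 6, 7, 11}" for i j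
    using that by (intro imageI monom2_in_gap_subring)
  define x :: "'k poly poly" where "x = monom2 0 5 + monom2 1 4"
  define y :: "'k poly poly" where "y = monom2 5 5 + monom2 2 8"
  define q :: "'k poly poly" where "q = monom2 2 3 - monom2 3 2 + monom2 4 1"
  define Q :: "'k poly poly" where
    "Q = monom2 7 8 - monom2 8 7 + monom2 9 6 + monom2 4 11 - monom2 5 10 + monom2 6 9"
  have "q * x = y" "y * y = Q * x"
    by (simp_all add: q_def x_def y_def Q_def algebra_simps monom2_mult eval_nat_numeral)
  moreover have "coeff2 x 0 5 = 1"
    by (simp add: x_def coeff2_monom2)
  then have "x \<noteq> 0"
    by auto
  ultimately have yx: "emb y / emb x = emb q" and yyx: "emb y * emb y / emb x = emb Q"
    by (simp_all add: emb_divide emb_mult[symmetric])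
  have "emb x \<in> ?R" "emb y \<in> ?R"
    unfolding x_def y_def emb_add by (intro ring_closed_add[OF R] monom; simp)+
  then have "emb x \<in> nzd ?R" "emb y \<in> ?R"
    using \<open>x \<noteq> 0\<close> by (auto simp: emb_eq_0_iff intro: nzdI)
  moreover have "emb q \<in> int_closure ?R"
    unfolding int_closure_gap_subring[OF G zero_less_numeral] q_def
    by (intro imageI veronese_add veronese_diff monom2_in_veronese) simp_all
  ultimately have "emb Q \<in> arf_step ?R"
    using arf_stepI[of "emb x" ?R "emb y" "emb y"] yx yyx by simp
  moreover have "emb (monom2 9 6) \<in> arf_step ?R" "emb (monom2 4 11) \<in> arf_step ?R"
    using monom2_in_arf_step[OF G _ _ _ _ _, of 5 1 4 5 5, where 'k = 'k]
      monom2_in_arf_step[OF G _ _ _ _ _, of 5 0 5 2 8, where 'k = 'k]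
    by (simp_all add: monom2_in_gap_subring)
  moreover have "emb (monom2 7 8) \<in> arf_step ?R" "emb (monom2 5 10) \<in> arf_step ?R"
    "emb (monom2 6 9) \<in> arf_step ?R"
    using A(2) monom by auto
  moreover have "monom2 8 7 = monom2 7 8 + monom2 9 6 + monom2 4 11 - monom2 5 10 + monom2 6 9 - Q"
    by (simp add: Q_def algebra_simps)
  ultimately show ?thesis
    by (simp only: emb_add emb_diff) (meson ring_closed_add[OF A(1)] ring_closed_diff[OF A(1)])
qed

lemma strict_closure_R2_subset:
  fixes R :: "'k::field poly poly fract set"
  defines "R \<equiv> emb ` gap_subring 5 {1, 2, 3, 6, 7, 11}"
  shows "strict_closure R (emb ` veronese 5) \<subseteq>
    {a + b * emb (monom2 9 6) + c * emb (monom2 8 7) + d * emb (monom2 4 11)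
      | a b c d. a \<in> R \<and> b \<in> R \<and> c \<in> R \<and> d \<in> R}"
proof
  fix \<alpha> assume \<alpha>: "\<alpha> \<in> strict_closure R (emb ` veronese 5)"
  then obtain p where p: "\<alpha> = emb p" "p \<in> veronese 5"
    by (auto simp: strict_closure_def)
  have "{1..2} \<subseteq> {1, 2, 3, 6, 7, 11 :: nat}" "{1..3} \<subseteq> {1, 2, 3, 6, 7, 11 :: nat}"
    by auto
  then have "coeff p 1 = 0" "coeff p 2 = 0" "coeff p 3 = 0" "coeff2 p 4 6 = 0" "coeff2 p 3 7 = 0"
    using strict_closure_coeff_eq_0[of \<alpha>, where e = 1] strict_closure_coeff_eq_0[of \<alpha>, where e = 2]
      strict_closure_coeff_eq_0[of \<alpha>, where e = 3] strict_closure_R2_coeff2_4_6[of \<alpha>]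
      strict_closure_R2_coeff2_3_7[of \<alpha>] \<alpha> p(1) by (auto simp: R_def)
  moreover have "i = 4 \<or> \<not> (5::nat) dvd i + 6" if "i < 9" for i
    using that by presburger
  moreover have "i = 3 \<or> \<not> (5::nat) dvd i + 7" if "i < 8" for i
    using that by presburger
  moreover have "\<not> (5::nat) dvd i + 11" if "i < 4" for i
    using that by presburger
  ultimately have low: "\<forall>i<9. coeff2 p i 6 = 0" "\<forall>i<8. coeff2 p i 7 = 0" "\<forall>i<4. coeff2 p i 11 = 0"
    using veroneseD[OF p(2)] by blast+
  note factor = monom_coeff_factor[OF p(2) _ _ gap_set_gaps[of 5, unfolded gaps_5]]
  obtain g1 where g1: "g1 \<in> gap_subring 5 {1, 2, 3, 6, 7, 11}" "monom (coeff p 6) 6 = g1 * monom2 9 6"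
    using factor[of 9 6] low(1) by auto
  obtain g2 where g2: "g2 \<in> gap_subring 5 {1, 2, 3, 6, 7, 11}" "monom (coeff p 7) 7 = g2 * monom2 8 7"
    using factor[of 8 7] low(2) by auto
  obtain g3 where g3: "g3 \<in> gap_subring 5 {1, 2, 3, 6, 7, 11}" "monom (coeff p 11) 11 = g3 * monom2 4 11"
    using factor[of 4 11] low(3) by auto
  have "p - (\<Sum>j\<in>{6, 7, 11}. monom (coeff p j) j) \<in> gap_subring 5 {1, 2, 3, 6, 7, 11}"
    using \<open>coeff p 1 = 0\<close> \<open>coeff p 2 = 0\<close> \<open>coeff p 3 = 0\<close>
    by (intro remove_monoms_in_gap_subring[OF p(2)]) auto
  moreover have "\<alpha> = emb (p - (\<Sum>j\<in>{6, 7, 11}. monom (coeff p j) j)) + emb g1 * emb (monom2 9 6)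
      + emb g2 * emb (monom2 8 7) + emb g3 * emb (monom2 4 11)"
    by (simp add: p(1) g1(2) g2(2) g3(2) emb_diff emb_add emb_mult)
  ultimately show "\<alpha> \<in> {a + b * emb (monom2 9 6) + c * emb (monom2 8 7) + d * emb (monom2 4 11)
      | a b c d. a \<in> R \<and> b \<in> R \<and> c \<in> R \<and> d \<in> R}"
    using g1(1) g2(1) g3(1) unfolding R_def by blast
qed

lemma R2_closures:
  fixes R :: "'k::field poly poly fract set"
  defines "R \<equiv> emb ` gap_subring 5 {1, 2, 3, 6, 7, 11}"
    and "E \<equiv> {a + b * (varX ^ 9 * varY ^ 6) + c * (varX ^ 8 * varY ^ 7) + d * (varX ^ 4 * varY ^ 11)
      | a b c d. a \<in> R \<and> b \<in> R \<and> c \<in> R \<and> d \<in> R}"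
  shows "R \<subset> E \<and> arf_closure R = E \<and> strict_closure R (int_closure R) = E"
proof -
  have G: "gap_set {1, 2, 3, 6, 7, 11 :: nat}" "finite {1, 2, 3, 6, 7, 11 :: nat}"
    using gap_set_gaps[of 5] by (simp_all add: gaps_5)
  have R: "ring_closed R"
    unfolding R_def by (rule ring_closed_gap_subring[OF G(1)])
  have w: "varX ^ 9 * varY ^ 6 = (emb (monom2 9 6) :: 'k poly poly fract)"
    "varX ^ 8 * varY ^ 7 = (emb (monom2 8 7) :: 'k poly poly fract)"
    "varX ^ 4 * varY ^ 11 = (emb (monom2 4 11) :: 'k poly poly fract)"
    by (simp_all only: varX_varY_power)
  have "emb (monom2 (2 * 5 - 1) (2 * 5 - 4)) \<in> arf_step R"
    "emb (monom2 (2 * 2 - 0) (2 * 8 - 5)) \<in> arf_step R"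
    unfolding R_def by (rule monom2_in_arf_step[OF G]; auto intro: monom2_in_gap_subring)+
  then have "E \<subseteq> arf_step R"
    using subset_arf_step[of R] R2_monom2_8_7_in_arf_step unfolding E_def w R_def
    by (auto intro!: ring_closed_add ring_closed_mult ring_closed_arf_step)
  moreover have "R \<subseteq> E" "emb (monom2 9 6) \<in> E" "emb (monom2 9 6) \<notin> R"
    using ring_closed_0[OF R] ring_closed_1[OF R] unfolding E_def w
    by (force, force, auto simp: R_def emb_inject gap_subring_def monom2_def)
  moreover have "strict_closure R (emb ` veronese 5) \<subseteq> E"
    using strict_closure_R2_subset[where 'k = 'k] unfolding E_def w R_def .
  ultimately show ?thesis
    using arf_closure_eq_strict_closure[OF G zero_less_numeral R_def[THEN meta_eq_to_obj_eq]]
    by blast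
qed

theorem mainTheorem14:
  fixes R1 R2 :: "'k::field poly poly fract set"
  defines "R1 \<equiv> kalg {varX ^ 4, varX * varY ^ 3, varY ^ 4}"
      and "R2 \<equiv> kalg {varX ^ 5, varX * varY ^ 4, varY ^ 5}"
  shows "R1 \<subset> arf_closure R1
       \<and> arf_closure R1 = strict_closure R1 (int_closure R1)
       \<and> strict_closure R1 (int_closure R1) =
           {a + b * (varX ^ 7 * varY ^ 5) | a b. a \<in> R1 \<and> b \<in> R1}
       \<and> R2 \<subset> arf_closure R2
       \<and> arf_closure R2 = strict_closure R2 (int_closure R2)
       \<and> strict_closure R2 (int_closure R2) =
           {a + b * (varX ^ 9 * varY ^ 6) + c * (varX ^ 8 * varY ^ 7) + d * (varX ^ 4 * varY ^ 11)
              | a b c d. a \<in> R2 \<and> b \<in> R2 \<and> c \<in> R2 \<and> d \<in> R2}"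
proof -
  have "R1 = emb ` gap_subring 4 {1, 2, 5}"
    using kalg_veronese_generators[of 4, where 'k = 'k] by (simp add: R1_def gaps_4)
  moreover have "R2 = emb ` gap_subring 5 {1, 2, 3, 6, 7, 11}"
    using kalg_veronese_generators[of 5, where 'k = 'k] by (simp add: R2_def gaps_5)
  ultimately show ?thesis
    using R1_closures[where 'k = 'k] R2_closures[where 'k = 'k] by simp
qed

end
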